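(* Fix $\sigma\in(0,\tfrac12)$. There exists $\lambda^{*}>0$ such that, denoting by $\overline{\Gamma_1(\lambda)}$ the closure of $\Gamma_1(\lambda)$ in $\mathbb{R}^2$: - for $\lambda\in(0,\lambda^{*})$, $\overline{\Gamma_1(\lambda)}\cap(\{0\}\times(0,+\infty))=\emptyset$; - for $\lambda=\lambda^{*}$, $\overline{\Gamma_1(\lambda)}\cap(\{0\}\times(0,+\infty))=\{(0,\xi^{*})\}$ for some $\xi^{*}\in(0,+\infty)$; - for $\lambda>\lambda^{*}$, $\overline{\Gamma_1(\lambda)}\cap(\{0\}\times(0,+\infty))=\{(0,\xi_0),(0,\xi_1)\}$ for some $0<\xi_0<\xi_1$.
   Context: Let $g(s)=s^2(1-s)$ and $G(u)=u^3/3-u^4/4$ on $[0,1]$. For $\lambda>0$ and $s\in(0,1)$, let $(\hat u_s,\hat v_s)$ be the unique solution, on its maximal interval of existence, of $u'=v$, $v'=-\lambda g(u)$, $u(1)=s$, $v(1)=0$. Let $\hat T_0(s)$ be the time taken by $(\hat u_s,\hat v_s)$ to go from $(s,0)$ to the half-line $\{0\}\times(0,+\infty)$ moving backwards in time along the level line $v^2+2\lambda G(u)=2\lambda G(s)$, let $\mathcal{I}^1_\lambda=\{s\in(0,1):\hat T_0(s)>\sigma\}$, and let $\Gamma_1(\lambda)=\{(\hat u_s(1-\sigma),\hat v_s(1-\sigma)): s\in\mathcal{I}^1_\lambda\}$. *)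

theory Defs
  imports "HOL-Analysis.Analysis"
begin

definition g :: "real \<Rightarrow> real" where
  "g s = s^2 * (1 - s)"

definition G :: "real \<Rightarrow> real" where
  "G u = u^3/3 - u^4/4"

definition is_sol :: "real \<Rightarrow> real \<Rightarrow> (real \<Rightarrow> real) \<Rightarrow> (real \<Rightarrow> real) \<Rightarrow> real set \<Rightarrow> bool" where
  "is_sol lam s u v T \<longleftrightarrow> is_interval T \<and> 1 \<in> T \<and> u 1 = s \<and> v 1 = 0 \<and>
     (\<forall>t\<in>T. (u has_real_derivative v t) (at t within T) \<and>
             (v has_real_derivative (- lam * g (u t))) (at t within T))"

text \<open>Time taken, moving backwards in time from (s,0) at time 1, to reach
  the half-line {0} x (0,+inf): the first (least) t > 0 such that the solution
  exists on [1-t,1] and (u(1-t),v(1-t)) lies on the half-line.\<close>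
definition T0hat :: "real \<Rightarrow> real \<Rightarrow> real" where
  "T0hat lam s = Inf {t. t > 0 \<and> (\<exists>u v. is_sol lam s u v {1-t..1} \<and> u (1-t) = 0 \<and> v (1-t) > 0)}"

definition I1 :: "real \<Rightarrow> real \<Rightarrow> real set" where
  "I1 lam \<sigma> = {s. 0 < s \<and> s < 1 \<and> T0hat lam s > \<sigma>}"

definition Gamma1 :: "real \<Rightarrow> real \<Rightarrow> (real \<times> real) set" where
  "Gamma1 lam \<sigma> = {p. \<exists>s\<in>I1 lam \<sigma>. \<exists>u v. is_sol lam s u v {1-\<sigma>..1} \<and> p = (u (1-\<sigma>), v (1-\<sigma>))}"

end

theory Submission
  imports Defs "HOL-Real_Asymp.Real_Asymp"
begin

text \<open>Energy conservation \<open>v^2 + 2 lam G u = 2 lam G s\<close> and the substitution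
  \<open>u = s (1 - z^2)\<close> turn the backward travel time from \<open>(s, 0)\<close> to the half-line into
  \<open>T0hat lam s = tau s / sqrt lam\<close>, where \<open>tau s\<close> integrates \<open>2 / sqrt (energy_quot s z)\<close>
  over \<open>z \<in> [0, 1]\<close> and \<open>energy_quot s z\<close> is a concave quadratic in \<open>s\<close>. Hence \<open>tau\<close> is
  strictly convex on \<open>(0, 1)\<close> and tends to infinity at both ends, so it decreases to a unique
  minimum \<open>tau s0\<close> and then increases. The points of the closure of \<open>Gamma1 lam \<sigma>\<close> on the
  half-line are exactly the points \<open>(0, sqrt (2 lam G s))\<close> of the orbits that reach the axis
  at time exactly \<open>\<sigma>\<close>, i.e. with \<open>tau s = sqrt lam * \<sigma>\<close>. There are none, one or two
  of them according as \<open>sqrt lam * \<sigma>\<close> is below, at or above \<open>tau s0\<close>, so the critical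
  value is \<open>(tau s0 / \<sigma>)^2\<close>.\<close>

section \<open>Strictly convex functions unbounded at both ends of an interval\<close>

definition strict_convex_on :: "'a::real_vector set \<Rightarrow> ('a \<Rightarrow> real) \<Rightarrow> bool" where
  "strict_convex_on S f \<longleftrightarrow> convex S \<and>
    (\<forall>x\<in>S. \<forall>y\<in>S. x \<noteq> y \<longrightarrow>
      (\<forall>t. 0 < t \<and> t < 1 \<longrightarrow> f ((1 - t) *\<^sub>R x + t *\<^sub>R y) < (1 - t) * f x + t * f y))"

lemma strict_convex_onI:
  assumes "convex S"
    and "\<And>x y t. x \<in> S \<Longrightarrow> y \<in> S \<Longrightarrow> x \<noteq> y \<Longrightarrow> 0 < t \<Longrightarrow> t < 1 \<Longrightarrow>
           f ((1 - t) *\<^sub>R x + t *\<^sub>R y) < (1 - t) * f x + t * f y"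
  shows "strict_convex_on S f"
  using assms unfolding strict_convex_on_def by blast

lemma strict_convex_onD:
  assumes "strict_convex_on S f" "x \<in> S" "y \<in> S" "x \<noteq> y" "0 < t" "t < 1"
  shows "f ((1 - t) *\<^sub>R x + t *\<^sub>R y) < (1 - t) * f x + t * f y"
  using assms unfolding strict_convex_on_def by blast

lemma strict_convex_on_imp_convex_on:
  assumes "strict_convex_on S f"
  shows "convex_on S f"
proof (rule convex_onI)
  show "convex S" using assms unfolding strict_convex_on_def by blast
  fix t :: real and x y assume "0 < t" "t < 1" "x \<in> S" "y \<in> S"
  then show "f ((1 - t) *\<^sub>R x + t *\<^sub>R y) \<le> (1 - t) * f x + t * f y"
    using strict_convex_onD[OF assms, of x y t]
    by (cases "x = y") (auto simp: scaleR_collapse algebra_simps simp flip: distrib_right)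
qed

lemma strict_convex_on_real_less_max:
  fixes f :: "real \<Rightarrow> real"
  assumes "strict_convex_on S f" "x \<in> S" "y \<in> S" "x < m" "m < y"
  shows "f m < max (f x) (f y)"
proof -
  define t where "t = (m - x) / (y - x)"
  have t: "0 < t" "t < 1" using assms(4,5) unfolding t_def by (auto simp: field_simps)
  have "t * (y - x) = m - x" using assms(4,5) unfolding t_def by simp
  then have "m = (1 - t) *\<^sub>R x + t *\<^sub>R y" by (simp add: algebra_simps)
  then have "f m < (1 - t) * f x + t * f y"
    using strict_convex_onD[OF assms(1-3) _ t] assms(4,5) by simp
  also have "\<dots> \<le> (1 - t) * max (f x) (f y) + t * max (f x) (f y)"
    using t by (intro add_mono mult_left_mono) auto
  finally show ?thesis by (simp add: algebra_simps)
qed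

lemma strict_convex_on_min_strict:
  assumes convex: "strict_convex_on S f" and s0: "s0 \<in> S" and min: "\<And>s. s \<in> S \<Longrightarrow> f s0 \<le> f s"
    and s: "s \<in> S" "s \<noteq> s0"
  shows "f s0 < f s"
proof -
  define m where "m = (1 - 1/2) *\<^sub>R s + (1/2) *\<^sub>R s0"
  have "convex S" using convex unfolding strict_convex_on_def by blast
  then have "m \<in> S" unfolding m_def using convexD[of S s s0 "1 - 1/2" "1/2"] s(1) s0 by simp
  moreover have "f m < (1 - 1/2) * f s + (1/2) * f s0"
    unfolding m_def using strict_convex_onD[OF convex s(1) s0 s(2), of "1/2"] by simp
  ultimately show ?thesis using min[of m] by simp
qed

lemma strict_convex_on_strict_mono_around_min:
  fixes f :: "real \<Rightarrow> real"
  assumes convex: "strict_convex_on {a<..<b} f" and s0: "s0 \<in> {a<..<b}"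
    and min: "\<And>s. s \<in> {a<..<b} \<Longrightarrow> f s0 \<le> f s"
  shows "strict_antimono_on {a<..s0} f" "strict_mono_on {s0..<b} f"
proof -
  note strict_min = strict_convex_on_min_strict[OF convex s0 min]
  show "strict_antimono_on {a<..s0} f"
  proof (rule monotone_onI)
    fix x y assume xy: "x \<in> {a<..s0}" "y \<in> {a<..s0}" "x < y"
    show "f y < f x"
    proof (cases "y = s0")
      case True
      then show ?thesis using strict_min[of x] xy s0 by auto
    next
      case False
      then have "f y < max (f x) (f s0)" using strict_convex_on_real_less_max[OF convex _ s0, of x y] xy s0 by auto
      then show ?thesis using min[of x] xy s0 by auto
    qed
  qed
  show "strict_mono_on {s0..<b} f"
  proof (rule monotone_onI)
    fix x y assume xy: "x \<in> {s0..<b}" "y \<in> {s0..<b}" "x < y"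
    show "f x < f y"
    proof (cases "x = s0")
      case True
      then show ?thesis using strict_min[of y] xy s0 by auto
    next
      case False
      then have "f x < max (f s0) (f y)" using strict_convex_on_real_less_max[OF convex s0, of y x] xy s0 by auto
      then show ?thesis using min[of y] xy s0 by auto
    qed
  qed
qed

lemma continuous_coercive_attains_min:
  fixes f :: "real \<Rightarrow> real"
  assumes "a < b" and cont: "continuous_on {a<..<b} f"
    and left: "filterlim f at_top (at_right a)" and right: "filterlim f at_top (at_left b)"
  obtains s0 where "s0 \<in> {a<..<b}" "\<And>s. s \<in> {a<..<b} \<Longrightarrow> f s0 \<le> f s"
proof -
  define c where "c = (a + b) / 2"
  have c: "a < c" "c < b" using \<open>a < b\<close> unfolding c_def by auto
  obtain \<alpha> where \<alpha>: "a < \<alpha>" "\<And>s. a < s \<Longrightarrow> s < \<alpha> \<Longrightarrow> f c < f s"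
    using left unfolding filterlim_at_top_dense eventually_at_right_field by blast
  obtain \<beta> where \<beta>: "\<beta> < b" "\<And>s. \<beta> < s \<Longrightarrow> s < b \<Longrightarrow> f c < f s"
    using right unfolding filterlim_at_top_dense eventually_at_left_field by blast
  define K where "K = {min \<alpha> c..max \<beta> c}"
  have K: "K \<subseteq> {a<..<b}" "c \<in> K" using \<alpha> \<beta> c unfolding K_def by auto
  obtain s0 where s0: "s0 \<in> K" "\<And>s. s \<in> K \<Longrightarrow> f s0 \<le> f s"
    using continuous_attains_inf[OF compact_Icc _ continuous_on_subset[OF cont K(1)[unfolded K_def]]] K(2)
    unfolding K_def by blast
  show thesis
  proof (rule that)
    show "s0 \<in> {a<..<b}" using s0(1) K(1) by blast
    fix s assume s: "s \<in> {a<..<b}"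
    show "f s0 \<le> f s"
    proof (cases "s \<in> K")
      case False
      then have "f c < f s" using s \<alpha>(2) \<beta>(2) unfolding K_def by (cases "s < c") auto
      then show ?thesis using s0(2)[OF K(2)] by linarith
    qed (use s0 in blast)
  qed
qed

locale valley =
  fixes f :: "real \<Rightarrow> real" and a b s0 :: real
  assumes s0: "s0 \<in> {a<..<b}"
    and cont: "continuous_on {a<..<b} f"
    and dec: "strict_antimono_on {a<..s0} f"
    and inc: "strict_mono_on {s0..<b} f"
    and top_left: "filterlim f at_top (at_right a)"
    and top_right: "filterlim f at_top (at_left b)"
begin

lemma min_le: "s \<in> {a<..<b} \<Longrightarrow> f s0 \<le> f s"
  using s0 monotone_onD[OF dec, of s s0] monotone_onD[OF inc, of s0 s]
  by (cases s s0 rule: linorder_cases) auto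

lemma level_below_min: "c < f s0 \<Longrightarrow> {s \<in> {a<..<b}. f s = c} = {}"
  using min_le by fastforce

lemma level_min: "{s \<in> {a<..<b}. f s = f s0} = {s0}"
  using s0 monotone_onD[OF dec, of _ s0] monotone_onD[OF inc, of s0] by (force simp: neq_iff)

lemma exists_above_left:
  obtains \<alpha> where "a < \<alpha>" "\<alpha> < s0" "c < f \<alpha>"
proof -
  obtain \<alpha> where "a < \<alpha>" "\<And>s. a < s \<Longrightarrow> s < \<alpha> \<Longrightarrow> c < f s"
    using top_left unfolding filterlim_at_top_dense eventually_at_right_field by blast
  then show thesis using that[of "(a + min \<alpha> s0) / 2"] s0 by auto
qed

lemma exists_above_right:
  obtains \<beta> where "s0 < \<beta>" "\<beta> < b" "c < f \<beta>"
proof -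
  obtain \<beta> where "\<beta> < b" "\<And>s. \<beta> < s \<Longrightarrow> s < b \<Longrightarrow> c < f s"
    using top_right unfolding filterlim_at_top_dense eventually_at_left_field by blast
  then show thesis using that[of "(b + max \<beta> s0) / 2"] s0 by auto
qed

lemma level_above_min:
  assumes "f s0 < c"
  obtains s1 s2 where "s1 < s2" "{s \<in> {a<..<b}. f s = c} = {s1, s2}"
proof -
  obtain \<alpha> where \<alpha>: "a < \<alpha>" "\<alpha> < s0" "c < f \<alpha>" by (rule exists_above_left)
  obtain \<beta> where \<beta>: "s0 < \<beta>" "\<beta> < b" "c < f \<beta>" by (rule exists_above_right)
  obtain s1 where s1: "\<alpha> \<le> s1" "s1 \<le> s0" "f s1 = c"
    using IVT2'[of f s0 c \<alpha>] \<alpha> assms continuous_on_subset[OF cont, of "{\<alpha>..s0}"] s0 by fastforce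
  obtain s2 where s2: "s0 \<le> s2" "s2 \<le> \<beta>" "f s2 = c"
    using IVT'[of f s0 c \<beta>] \<beta> assms continuous_on_subset[OF cont, of "{s0..\<beta>}"] s0 by fastforce
  have "s1 \<noteq> s0" "s2 \<noteq> s0" using s1 s2 assms by auto
  have inj: "inj_on f {a<..s0}" "inj_on f {s0..<b}"
    using dec inc strict_mono_on_imp_inj_on by (auto simp: strict_antimono_iff_antimono)
  have "{s \<in> {a<..<b}. f s = c} = {s1, s2}"
  proof (intro equalityI subsetI)
    fix s assume "s \<in> {s \<in> {a<..<b}. f s = c}"
    then show "s \<in> {s1, s2}"
      using inj_onD[OF inj(1), of s s1] inj_onD[OF inj(2), of s s2] s1 s2 \<alpha> \<beta> by (cases "s \<le> s0") auto
  qed (use s1 s2 \<alpha> \<beta> in auto)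
  moreover have "s1 < s2" using s1 s2 \<open>s1 \<noteq> s0\<close> \<open>s2 \<noteq> s0\<close> by linarith
  ultimately show thesis using that by simp
qed

lemma in_closure_above:
  assumes s: "s \<in> {a<..<b}"
  shows "s \<in> closure {x \<in> {a<..<b}. f s < f x}"
proof (cases "s \<le> s0")
  case True
  have "{a<..<s} \<subseteq> {x \<in> {a<..<b}. f s < f x}"
    using monotone_onD[OF dec] True s by auto
  then have "closure {a<..<s} \<subseteq> closure {x \<in> {a<..<b}. f s < f x}" by (rule closure_mono)
  then show ?thesis using s by auto
next
  case False
  have "{s<..<b} \<subseteq> {x \<in> {a<..<b}. f s < f x}"
    using monotone_onD[OF inc] False s by auto
  then have "closure {s<..<b} \<subseteq> closure {x \<in> {a<..<b}. f s < f x}" by (rule closure_mono)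
  then show ?thesis using s by auto
qed

end

lemma strict_convex_coercive_valley:
  fixes f :: "real \<Rightarrow> real"
  assumes convex: "strict_convex_on {a<..<b} f" and "a < b"
    and left: "filterlim f at_top (at_right a)" and right: "filterlim f at_top (at_left b)"
  obtains s0 where "valley f a b s0"
proof -
  have cont: "continuous_on {a<..<b} f"
    using convex_on_continuous[OF open_greaterThanLessThan strict_convex_on_imp_convex_on[OF convex]] .
  obtain s0 where s0: "s0 \<in> {a<..<b}" "\<And>s. s \<in> {a<..<b} \<Longrightarrow> f s0 \<le> f s"
    using continuous_coercive_attains_min[OF \<open>a < b\<close> cont left right] by blast
  show thesis
    using strict_convex_on_strict_mono_around_min[OF convex s0] s0 cont left right
    by (intro that) (unfold_locales)
qed

section \<open>The travel time to the axis\<close>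

definition energy_coef_a :: "real \<Rightarrow> real" where
  "energy_coef_a w = (1 + w + w^2) / 3"

definition energy_coef_b :: "real \<Rightarrow> real" where
  "energy_coef_b w = (1 + w) * (1 + w^2) / 4"

definition energy_quot :: "real \<Rightarrow> real \<Rightarrow> real" where
  "energy_quot s z = 2 * s * (energy_coef_a (1 - z^2) - s * energy_coef_b (1 - z^2))"

definition time_density :: "real \<Rightarrow> real \<Rightarrow> real" where
  "time_density s z = 2 / sqrt (energy_quot s z)"

text \<open>The base point \<open>-2\<close> is arbitrary: it only makes \<open>time_primitive s\<close> differentiable on a
  neighbourhood of \<open>[-1, 2]\<close>, where it is inverted to construct solutions.\<close>
definition time_primitive :: "real \<Rightarrow> real \<Rightarrow> real" where
  "time_primitive s z = integral {-2..z} (time_density s)"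

definition tau :: "real \<Rightarrow> real" where
  "tau s = integral {0..1} (time_density s)"

lemma G_diff_energy_quot: "G s - G (s * (1 - z^2)) = s^2 * z^2 * energy_quot s z / 2"
  unfolding G_def energy_quot_def energy_coef_a_def energy_coef_b_def by (simp add: field_simps) algebra

lemma energy_coef_decomp:
  "12 * (energy_coef_a w - s * energy_coef_b w) =
     4 * (1 - s) * (1 + w + w^2) + s * (1 - w) * (3 * w^2 + 2 * w + 1)"
  unfolding energy_coef_a_def energy_coef_b_def by (simp add: field_simps) algebra

lemma energy_coef_a_minus_b: "energy_coef_a w - energy_coef_b w = (1 - w) * (3 * w^2 + 2 * w + 1) / 12"
  using energy_coef_decomp[of w 1] by simp

lemma energy_coef_diff_pos:
  assumes "0 \<le> s" "s < 1" "w \<le> 1"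
  shows "0 < energy_coef_a w - s * energy_coef_b w"
proof -
  have "0 < (w + 1/2)^2 + 3/4" "0 < 3 * (w + 1/3)^2 + 2/3"
    by (simp_all add: add_nonneg_pos)
  then have "0 < 1 + w + w^2" "0 < 3 * w^2 + 2 * w + 1"
    by (simp_all add: power2_eq_square algebra_simps)
  then have "0 < 12 * (energy_coef_a w - s * energy_coef_b w)"
    unfolding energy_coef_decomp using assms by (intro add_pos_nonneg) auto
  then show ?thesis by simp
qed

lemma energy_coef_bounds:
  assumes "0 \<le> w" "w \<le> 1"
  shows "energy_coef_a w \<le> 1" "1/4 \<le> energy_coef_b w" "energy_coef_b w \<le> 1"
proof -
  have "w^2 \<le> 1" using assms by (simp add: power_le_one)
  then show "energy_coef_a w \<le> 1" using assms unfolding energy_coef_a_def by simp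
  have "1 \<le> (1 + w) * (1 + w^2)" using assms by (simp add: algebra_simps)
  then show "1/4 \<le> energy_coef_b w" unfolding energy_coef_b_def by simp
  have "(1 + w) * (1 + w^2) \<le> 2 * 2" using assms \<open>w^2 \<le> 1\<close> by (intro mult_mono) auto
  then show "energy_coef_b w \<le> 1" unfolding energy_coef_b_def by simp
qed

lemma one_minus_sq_bounds:
  fixes z :: real
  assumes "0 \<le> z" "z \<le> 1"
  shows "0 \<le> 1 - z^2" "1 - z^2 \<le> 1"
proof -
  have "z^2 \<le> 1" using power_le_one[OF assms] .
  then show "0 \<le> 1 - z^2" "1 - z^2 \<le> 1" by simp_all
qed

lemma energy_quot_pos:
  assumes "0 < s" "s < 1"
  shows "0 < energy_quot s z"
  using energy_coef_diff_pos[of s "1 - z^2"] assms unfolding energy_quot_def by simp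

lemma energy_quot_le:
  assumes "0 < s" "s < 1" "0 \<le> z" "z \<le> 1"
  shows "energy_quot s z \<le> 2 * s"
proof -
  note w = one_minus_sq_bounds[OF assms(3,4)]
  have "0 \<le> s * energy_coef_b (1 - z^2)" using energy_coef_bounds(2)[OF w] assms by simp
  then have "energy_coef_a (1 - z^2) - s * energy_coef_b (1 - z^2) \<le> 1"
    using energy_coef_bounds(1)[OF w] by linarith
  then show ?thesis unfolding energy_quot_def using assms by simp
qed

lemma energy_quot_le_sq:
  assumes "0 < s" "s < 1" "0 \<le> z" "z \<le> 1"
  shows "energy_quot s z \<le> z^2 + 2 * (1 - s)"
proof -
  define w where "w = 1 - z^2"
  note w = one_minus_sq_bounds[OF assms(3,4), folded w_def]
  have "energy_coef_a w - energy_coef_b w \<le> z^2 / 2"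
  proof -
    have "w^2 \<le> 1" using w by (simp add: power_le_one)
    then have "3 * w^2 + 2 * w + 1 \<le> 6" using w by simp
    then have "(1 - w) * (3 * w^2 + 2 * w + 1) \<le> (1 - w) * 6" using w by (intro mult_left_mono) auto
    then show ?thesis unfolding energy_coef_a_minus_b w_def by simp
  qed
  moreover have "(1 - s) * energy_coef_b w \<le> 1 - s" using energy_coef_bounds(3)[OF w] assms by simp
  ultimately have "energy_coef_a w - s * energy_coef_b w \<le> z^2 / 2 + (1 - s)" by (simp add: algebra_simps)
  moreover have "s * (energy_coef_a w - s * energy_coef_b w) \<le> energy_coef_a w - s * energy_coef_b w"
    using energy_coef_diff_pos[of s w] w assms by (intro mult_left_le_one_le) auto
  ultimately show ?thesis unfolding energy_quot_def w_def[symmetric] by simp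
qed

lemma energy_quot_ge:
  assumes "0 < s" "s < 1" "1/2 \<le> z" "z \<le> 1"
  shows "s / 24 \<le> energy_quot s z"
proof -
  define w where "w = 1 - z^2"
  note w = one_minus_sq_bounds[of z, folded w_def]
  have "(1/2)^2 \<le> z^2" using assms by (intro power_mono) auto
  then have "1/4 \<le> 1 - w" unfolding w_def by (simp add: power2_eq_square)
  moreover have "1 \<le> 3 * w^2 + 2 * w + 1" using w assms by simp
  ultimately have "1/4 * 1 \<le> (1 - w) * (3 * w^2 + 2 * w + 1)" by (intro mult_mono) auto
  then have "1/48 \<le> energy_coef_a w - energy_coef_b w" unfolding energy_coef_a_minus_b by simp
  moreover have "s * energy_coef_b w \<le> energy_coef_b w"
    using energy_coef_bounds(2)[OF w] assms by simp
  ultimately have "1/48 \<le> energy_coef_a w - s * energy_coef_b w" by simp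
  then show ?thesis unfolding energy_quot_def w_def[symmetric] using assms by simp
qed

lemma energy_quot_midpoint:
  "energy_quot ((1 - t) * x + t * y) z =
     (1 - t) * energy_quot x z + t * energy_quot y z + 2 * t * (1 - t) * energy_coef_b (1 - z^2) * (x - y)^2"
  unfolding energy_quot_def by (simp add: algebra_simps power2_eq_square)

lemma time_density_pos: "0 < s \<Longrightarrow> s < 1 \<Longrightarrow> 0 < time_density s z"
  using energy_quot_pos unfolding time_density_def by simp

lemma continuous_on_time_density:
  assumes "0 < s" "s < 1"
  shows "continuous_on S (time_density s)"
proof -
  have "continuous_on S (energy_quot s)"
    unfolding energy_quot_def energy_coef_a_def energy_coef_b_def by (intro continuous_intros) auto
  moreover have "energy_quot s z \<noteq> 0" for z using energy_quot_pos[OF assms, of z] by simp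
  ultimately show ?thesis unfolding time_density_def by (intro continuous_intros) auto
qed

lemma time_density_integrable: "0 < s \<Longrightarrow> s < 1 \<Longrightarrow> time_density s integrable_on {a..b}"
  by (rule integrable_continuous_interval[OF continuous_on_time_density])

lemma time_density_ge:
  assumes "0 < s" "s < 1" "0 \<le> z" "z \<le> 1"
  shows "2 / sqrt (2 * s) \<le> time_density s z"
  unfolding time_density_def using energy_quot_le[OF assms] energy_quot_pos[OF assms(1,2)] assms
  by (intro divide_left_mono) auto

lemma time_density_ge_one:
  assumes "0 < s" "s < 1" "0 \<le> z" "z \<le> 1"
  shows "1 \<le> time_density s z"
proof -
  have "sqrt (2 * s) \<le> sqrt 4" using assms by (intro real_sqrt_le_mono) auto
  then have "1 \<le> 2 / sqrt (2 * s)" using assms by simp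
  then show ?thesis using time_density_ge[OF assms] by linarith
qed

lemma time_density_le:
  assumes "0 < s" "s < 1" "1/2 \<le> z" "z \<le> 1"
  shows "time_density s z \<le> 2 / sqrt (s / 24)"
  unfolding time_density_def using energy_quot_ge[OF assms] assms
  by (intro divide_left_mono) auto

lemma time_density_ge_hyperbola:
  assumes "0 < s" "s < 1" "0 \<le> z" "z \<le> 1"
  shows "2 / (z + sqrt (2 * (1 - s))) \<le> time_density s z"
proof -
  define c where "c = sqrt (2 * (1 - s))"
  have c: "0 < c" "c^2 = 2 * (1 - s)" unfolding c_def using assms by auto
  have "0 \<le> z * c" using c assms by simp
  then have "energy_quot s z \<le> (z + c)^2"
    using energy_quot_le_sq[OF assms] c by (simp add: power2_sum)
  then have "sqrt (energy_quot s z) \<le> z + c"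
    using c assms by (metis real_sqrt_le_mono real_sqrt_abs abs_of_nonneg add_nonneg_nonneg less_imp_le)
  then show ?thesis
    unfolding time_density_def c_def[symmetric] using energy_quot_pos[OF assms(1,2), of z] c assms
    by (intro divide_left_mono) auto
qed

lemma convex_on_two_div_sqrt: "convex_on {0<..} (\<lambda>p::real. 2 / sqrt p)"
proof (rule convex_on_realI[where f'="\<lambda>p. - 1 / (p * sqrt p)"])
  fix x :: real assume "x \<in> {0<..}"
  then show "((\<lambda>p. 2 / sqrt p) has_real_derivative - 1 / (x * sqrt x)) (at x)"
    by (auto intro!: derivative_eq_intros simp: field_simps)
next
  fix x y :: real assume "x \<in> {0<..}" "y \<in> {0<..}" "x \<le> y"
  then have "x * sqrt x \<le> y * sqrt y" "0 < x * sqrt x" by (auto intro!: mult_mono)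
  then show "- 1 / (x * sqrt x) \<le> - 1 / (y * sqrt y)" by (simp add: frac_le)
qed simp

text \<open>The energy quotient is a concave quadratic in \<open>s\<close> and \<open>p \<mapsto> 2 / sqrt p\<close> is convex and
  decreasing, so the time density is strictly convex in \<open>s\<close>.\<close>
lemma time_density_strict_convex:
  assumes z: "0 \<le> z" "z \<le> 1"
  shows "strict_convex_on {0<..<1} (\<lambda>s. time_density s z)"
proof (rule strict_convex_onI)
  fix x y t :: real
  assume x: "x \<in> {0<..<1}" and y: "y \<in> {0<..<1}" and "x \<noteq> y" and t: "0 < t" "t < 1"
  define L where "L = (1 - t) * energy_quot x z + t * energy_quot y z"
  have L: "0 < L" unfolding L_def using energy_quot_pos x y t by (simp add: add_pos_pos)
  have "0 < 2 * t * (1 - t) * energy_coef_b (1 - z^2) * (x - y)^2"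
    using energy_coef_bounds(2)[OF one_minus_sq_bounds[OF z]] t \<open>x \<noteq> y\<close> by simp
  then have "L < energy_quot ((1 - t) *\<^sub>R x + t *\<^sub>R y) z"
    unfolding L_def by (simp add: energy_quot_midpoint)
  then have "time_density ((1 - t) *\<^sub>R x + t *\<^sub>R y) z < 2 / sqrt L"
    unfolding time_density_def using L by (simp add: divide_strict_left_mono)
  also have "\<dots> \<le> (1 - t) * time_density x z + t * time_density y z"
    using convex_onD[OF convex_on_two_div_sqrt, of t "energy_quot x z" "energy_quot y z"] t
      energy_quot_pos x y
    unfolding L_def time_density_def by simp
  finally show "time_density ((1 - t) *\<^sub>R x + t *\<^sub>R y) z < (1 - t) * time_density x z + t * time_density y z" .
qed simp

lemma strict_convex_on_integral:
  fixes F :: "'a::real_vector \<Rightarrow> real \<Rightarrow> real"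
  assumes "c < d"
    and convex: "\<And>z. z \<in> {c..d} \<Longrightarrow> strict_convex_on S (\<lambda>s. F s z)"
    and cont: "\<And>s. s \<in> S \<Longrightarrow> continuous_on {c..d} (F s)"
  shows "strict_convex_on S (\<lambda>s. integral {c..d} (F s))"
proof (rule strict_convex_onI)
  show "convex S" using convex[of c] \<open>c < d\<close> unfolding strict_convex_on_def by auto
  fix x y and t :: real assume x: "x \<in> S" and y: "y \<in> S" and "x \<noteq> y" and t: "0 < t" "t < 1"
  define m where "m = (1 - t) *\<^sub>R x + t *\<^sub>R y"
  have "m \<in> S" unfolding m_def using convexD[OF \<open>convex S\<close> x y, of "1 - t" t] t by simp
  have "integral {c..d} (F m) < integral {c..d} (\<lambda>z. (1 - t) * F x z + t * F y z)"
    using convex \<open>x \<noteq> y\<close> x y t \<open>c < d\<close> unfolding m_def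
    by (intro integral_less_real continuous_intros cont \<open>m \<in> S\<close>[unfolded m_def] strict_convex_onD) auto
  also have "\<dots> = (1 - t) * integral {c..d} (F x) + t * integral {c..d} (F y)"
    using integrable_continuous_interval[OF cont[OF x]] integrable_continuous_interval[OF cont[OF y]]
    by (intro integral_unique has_integral_add has_integral_mult_right integrable_integral)
  finally show "integral {c..d} (F ((1 - t) *\<^sub>R x + t *\<^sub>R y)) <
      (1 - t) * integral {c..d} (F x) + t * integral {c..d} (F y)" unfolding m_def .
qed

lemma tau_strict_convex: "strict_convex_on {0<..<1} tau"
  unfolding tau_def[abs_def]
  by (rule strict_convex_on_integral) (auto intro: time_density_strict_convex continuous_on_time_density)

lemma tau_ge:
  assumes "0 < s" "s < 1"
  shows "2 / sqrt (2 * s) \<le> tau s"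
proof -
  have "integral {0..1} (\<lambda>z::real. 2 / sqrt (2 * s)) \<le> tau s"
    unfolding tau_def using time_density_ge[OF assms] time_density_integrable[OF assms]
    by (intro integral_le) auto
  then show ?thesis by simp
qed

lemma tau_ge_log:
  assumes "0 < s" "s < 1"
  shows "2 * ln (1 + sqrt (2 * (1 - s))) - 2 * ln (sqrt (2 * (1 - s))) \<le> tau s"
proof -
  define c where "c = sqrt (2 * (1 - s))"
  have c: "0 < c" unfolding c_def using assms by simp
  have "((\<lambda>z. 2 / (z + c)) has_integral (2 * ln (1 + c) - 2 * ln (0 + c))) {0..1}"
    by (rule fundamental_theorem_of_calculus[where f="\<lambda>z. 2 * ln (z + c)"])
       (use c in \<open>auto intro!: derivative_eq_intros simp: has_real_derivative_iff_has_vector_derivative[symmetric]\<close>)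
  moreover have "integral {0..1} (\<lambda>z. 2 / (z + c)) \<le> tau s"
    unfolding tau_def c_def
    using calculation time_density_ge_hyperbola[OF assms] time_density_integrable[OF assms]
    by (intro integral_le) (auto simp: c_def)
  ultimately show ?thesis unfolding c_def by (simp add: integral_unique)
qed

lemma tau_at_right_0: "filterlim tau at_top (at_right 0)"
proof (rule filterlim_at_top_mono)
  show "filterlim (\<lambda>s. 2 / sqrt (2 * s)) at_top (at_right (0::real))" by real_asymp
  show "\<forall>\<^sub>F s in at_right 0. 2 / sqrt (2 * s) \<le> tau s"
    unfolding eventually_at_right_field using tau_ge by (intro exI[of _ 1]) auto
qed

lemma tau_at_left_1: "filterlim tau at_top (at_left 1)"
proof (rule filterlim_at_top_mono)
  show "filterlim (\<lambda>s. 2 * ln (1 + sqrt (2 * (1 - s))) - 2 * ln (sqrt (2 * (1 - s)))) at_top (at_left (1::real))"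
    by real_asymp
  show "\<forall>\<^sub>F s in at_left 1. 2 * ln (1 + sqrt (2 * (1 - s))) - 2 * ln (sqrt (2 * (1 - s))) \<le> tau s"
    unfolding eventually_at_left_field using tau_ge_log by (intro exI[of _ 0]) auto
qed

lemma tau_valley:
  obtains s0 where "valley tau 0 1 s0"
  using strict_convex_coercive_valley[OF tau_strict_convex _ tau_at_right_0 tau_at_left_1] by auto

lemma tau_pos:
  assumes "0 < s" "s < 1"
  shows "0 < tau s"
proof -
  have "0 < 2 / sqrt (2 * s)" using assms by simp
  then show ?thesis using tau_ge[OF assms] by linarith
qed

lemma time_primitive_deriv:
  assumes "0 < s" "s < 1" "-2 < z"
  shows "(time_primitive s has_real_derivative time_density s z) (at z)"
proof -
  have "((\<lambda>x. integral {-2..x} (time_density s)) has_real_derivative time_density s z) (at z within {-2..z+1})"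
    using continuous_on_time_density[OF assms(1,2)] assms by (intro integral_has_real_derivative) auto
  moreover have "z \<in> interior {-2..z+1}" using assms by auto
  ultimately show ?thesis unfolding time_primitive_def using at_within_interior by metis
qed

lemma continuous_on_time_primitive: "0 < s \<Longrightarrow> s < 1 \<Longrightarrow> continuous_on {-1..} (time_primitive s)"
  by (rule has_real_derivative_imp_continuous_on[OF time_primitive_deriv]) auto

lemma time_primitive_diff:
  assumes "0 < s" "s < 1" "-2 \<le> a" "a \<le> b"
  shows "time_primitive s b - time_primitive s a = integral {a..b} (time_density s)"
  using Henstock_Kurzweil_Integration.integral_combine[OF assms(3,4) time_density_integrable[OF assms(1,2)]]
  unfolding time_primitive_def by simp

lemma tau_eq_time_primitive: "0 < s \<Longrightarrow> s < 1 \<Longrightarrow> tau s = time_primitive s 1 - time_primitive s 0"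
  using time_primitive_diff[of s 0 1] unfolding tau_def by simp

lemma time_primitive_strict_mono:
  assumes "0 < s" "s < 1"
  shows "strict_mono_on {-1..} (time_primitive s)"
proof (rule strict_mono_onI)
  fix a b :: real assume "a \<in> {-1..}" "a < b"
  then show "time_primitive s a < time_primitive s b"
  proof (intro DERIV_pos_imp_increasing[OF \<open>a < b\<close>])
    fix x assume "a \<le> x"
    then have "-2 < x" using \<open>a \<in> {-1..}\<close> by simp
    then show "\<exists>y. (time_primitive s has_real_derivative y) (at x) \<and> 0 < y"
      using time_primitive_deriv[OF assms] time_density_pos[OF assms] by blast
  qed
qed

lemma time_primitive_diff_ge:
  assumes "0 < s" "s < 1" "0 \<le> a" "a \<le> b" "b \<le> 1"
  shows "b - a \<le> time_primitive s b - time_primitive s a"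
proof -
  have "integral {a..b} (\<lambda>z::real. 1) \<le> integral {a..b} (time_density s)"
    using time_density_ge_one[OF assms(1,2)] time_density_integrable[OF assms(1,2)] assms
    by (intro integral_le) auto
  then show ?thesis using time_primitive_diff[OF assms(1,2), of a b] assms by simp
qed

lemma time_primitive_diff_le:
  assumes "0 < s" "s < 1" "1/2 \<le> a" "a \<le> b" "b \<le> 1"
  shows "time_primitive s b - time_primitive s a \<le> 2 / sqrt (s / 24) * (b - a)"
proof -
  have "integral {a..b} (time_density s) \<le> integral {a..b} (\<lambda>z::real. 2 / sqrt (s / 24))"
    using time_density_le[OF assms(1,2)] time_density_integrable[OF assms(1,2)] assms
    by (intro integral_le) auto
  then show ?thesis using time_primitive_diff[OF assms(1,2), of a b] assms by (simp add: mult.commute)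
qed

section \<open>Solutions of the equation\<close>

lemma G_deriv: "(G has_real_derivative g x) (at x)"
  unfolding G_def g_def
  by (auto intro!: derivative_eq_intros simp: algebra_simps power2_eq_square power3_eq_cube)

lemma G_0 [simp]: "G 0 = 0"
  unfolding G_def by simp

lemma G_pos:
  assumes "0 < y" "y \<le> 1"
  shows "0 < G y"
proof -
  have "G y = y^3 * (4 - 3 * y) / 12" unfolding G_def by (simp add: field_simps power3_eq_cube power4_eq_xxxx)
  moreover have "0 < y^3 * (4 - 3 * y)" using assms by (intro mult_pos_pos) auto
  ultimately show ?thesis by simp
qed

lemma strict_mono_on_G: "strict_mono_on {..1} G"
proof -
  have mvt: "G x < G y" if "x < y" "y \<le> 1" "0 \<le> x \<or> y \<le> 0" for x y
  proof -
    obtain z where z: "x < z" "z < y" "G y - G x = (y - x) * g z"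
      using MVT2[OF \<open>x < y\<close>, of G g] G_deriv by blast
    have "z \<noteq> 0" using z that by auto
    then have "0 < g z" unfolding g_def using z that by simp
    then have "0 < (y - x) * g z" using \<open>x < y\<close> by simp
    then show ?thesis using z(3) by linarith
  qed
  show ?thesis
  proof (rule strict_mono_onI)
    fix x y :: real assume "x \<in> {..1}" "y \<in> {..1}" "x < y"
    then show "G x < G y"
      using mvt[of x 0] mvt[of 0 y] mvt[of x y] by (cases "x < 0 \<and> 0 < y") auto
  qed
qed

lemma G_less_iff: "x \<le> 1 \<Longrightarrow> y \<le> 1 \<Longrightarrow> G x < G y \<longleftrightarrow> x < y"
  using strict_mono_on_less[OF strict_mono_on_G] by simp

lemma isCont_G: "isCont G x"
  using G_deriv by (rule DERIV_isCont)

lemma is_sol_restrict: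
  assumes "is_sol lam s u v {a..1}" "a \<le> c" "c \<le> 1"
  shows "is_sol lam s u v {c..1}"
  using assms unfolding is_sol_def
  by (auto intro: DERIV_subset[of _ _ _ "{a..1}"] simp: is_interval_cc)

lemma is_sol_continuous_on:
  assumes "is_sol lam s u v T"
  shows "continuous_on T u" "continuous_on T v"
  using assms unfolding is_sol_def by (auto intro: DERIV_continuous_on)

lemma is_sol_energy:
  assumes sol: "is_sol lam s u v {c..1}" and t: "t \<in> {c..1}"
  shows "(v t)^2 + 2 * lam * G (u t) = 2 * lam * G s"
proof -
  have "((\<lambda>t. (v t)^2 + 2 * lam * G (u t)) has_real_derivative 0) (at t within {c..1})"
    if "t \<in> {c..1}" for t
  proof -
    have u: "(u has_real_derivative v t) (at t within {c..1})"
      and v: "(v has_real_derivative (- lam * g (u t))) (at t within {c..1})"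
      using sol that unfolding is_sol_def by auto
    have "((\<lambda>t. (v t)^2) has_real_derivative 2 * v t * (- lam * g (u t))) (at t within {c..1})"
      using DERIV_power[OF v, of 2] by (simp add: algebra_simps)
    then have "((\<lambda>t. (v t)^2 + 2 * lam * G (u t)) has_real_derivative
        2 * v t * (- lam * g (u t)) + 2 * lam * (g (u t) * v t)) (at t within {c..1})"
      by (intro DERIV_add DERIV_cmult DERIV_chain'[OF u G_deriv])
    then show ?thesis by (simp add: algebra_simps)
  qed
  then obtain C where C: "\<And>x. x \<in> {c..1} \<Longrightarrow> (v x)^2 + 2 * lam * G (u x) = C"
    using has_field_derivative_zero_constant[of "{c..1}" "\<lambda>t. (v t)^2 + 2 * lam * G (u t)"] by auto
  have "C = 2 * lam * G s" using C[of 1] sol t unfolding is_sol_def by auto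
  then show ?thesis using C[OF t] by simp
qed

lemma is_sol_mvt:
  assumes "is_sol lam s u v {c..1}" "c \<le> a" "a < b" "b \<le> 1"
  obtains x where "x \<in> {a<..<b}" "u b - u a = v x * (b - a)"
proof -
  have "\<exists>x\<in>{a<..<b}. u b - u a = (*) (v x) (b - a)"
  proof (rule mvt_simple[OF assms(3)])
    fix x assume "a \<le> x" "x \<le> b"
    then have "(u has_real_derivative v x) (at x within {c..1})" using assms unfolding is_sol_def by auto
    then have "(u has_real_derivative v x) (at x within {a..b})" by (rule DERIV_subset) (use assms in auto)
    then show "(u has_derivative (*) (v x)) (at x within {a..b})" by (simp add: has_field_derivative_def)
  qed
  then show thesis using that by blast
qed

text \<open>Because \<open>v 1 = 0\<close> and \<open>v' 1 = - lam * g s < 0\<close>.\<close>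
lemma is_sol_v_pos_near_1:
  assumes lam: "0 < lam" and s: "0 < s" "s < 1" and sol: "is_sol lam s u v {c..1}" and "c < 1"
  obtains d where "0 < d" "\<And>x. c \<le> x \<Longrightarrow> 1 - d < x \<Longrightarrow> x < 1 \<Longrightarrow> 0 < v x"
proof -
  have "(v has_real_derivative (- lam * g (u 1))) (at 1 within {c..1})" and "v 1 = 0" "u 1 = s"
    using sol \<open>c < 1\<close> unfolding is_sol_def by auto
  moreover have "- lam * g s < 0" using lam s unfolding g_def by simp
  ultimately obtain d where d: "d > 0" "\<forall>h>0. 1 - h \<in> {c..1} \<longrightarrow> h < d \<longrightarrow> v 1 < v (1 - h)"
    using has_real_derivative_neg_dec_left by metis
  show thesis
  proof (rule that[OF d(1)])
    fix x assume "c \<le> x" "1 - d < x" "x < 1"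
    then show "0 < v x" using d(2)[rule_format, of "1 - x"] \<open>v 1 = 0\<close> by auto
  qed
qed

lemma is_sol_v_pos:
  assumes lam: "0 < lam" and s: "0 < s" "s < 1" and sol: "is_sol lam s u v {c..1}" and t: "c \<le> t" "t < 1"
  shows "0 < v t"
proof (rule ccontr)
  assume "\<not> 0 < v t"
  obtain d where d: "0 < d" "d < 1 - t" "\<And>x. c \<le> x \<Longrightarrow> 1 - d < x \<Longrightarrow> x < 1 \<Longrightarrow> 0 < v x"
  proof -
    obtain d where "0 < d" and pos: "\<And>x. c \<le> x \<Longrightarrow> 1 - d < x \<Longrightarrow> x < 1 \<Longrightarrow> 0 < v x"
      using is_sol_v_pos_near_1[OF lam s sol] t by auto
    show thesis by (rule that[of "min d ((1 - t) / 2)"]) (use \<open>0 < d\<close> t pos in \<open>auto simp: min_less_iff_disj\<close>)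
  qed
  have vc: "continuous_on {c..1} v" using is_sol_continuous_on[OF sol] by simp
  define S where "S = {x \<in> {t..1 - d}. v x \<le> 0}"
  have "t \<in> S" unfolding S_def using \<open>\<not> 0 < v t\<close> d by auto
  moreover have "closed S" unfolding S_def
    by (rule continuous_on_closed_Collect_le) (use continuous_on_subset[OF vc, of "{t..1 - d}"] t d in auto)
  moreover have "bdd_above S" unfolding S_def by (rule bdd_aboveI[of _ 1]) (use d in auto)
  ultimately have "Sup S \<in> S" using closed_contains_Sup by blast
  define t1 where "t1 = Sup S"
  have t1: "t \<le> t1" "t1 \<le> 1 - d" "v t1 \<le> 0" using \<open>Sup S \<in> S\<close> unfolding S_def t1_def by auto
  have after: "0 < v x" if "t1 < x" "x < 1" for x
  proof (cases "x \<le> 1 - d")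
    case True
    then have "x \<notin> S" using that \<open>bdd_above S\<close> cSup_upper unfolding t1_def by fastforce
    then show ?thesis using True that t1 unfolding S_def by auto
  qed (use d(3)[of x] that t t1 in auto)
  have "v t1 = 0"
  proof (rule ccontr)
    assume "v t1 \<noteq> 0"
    have "0 < v (1 - d/2)" using d t t1 by (intro d(3)) auto
    moreover have "continuous_on {t1..1 - d/2} v"
      by (rule continuous_on_subset[OF vc]) (use t t1 d in auto)
    ultimately have "\<exists>y\<ge>t1. y \<le> 1 - d/2 \<and> v y = 0"
      using t1(2,3) d(1) by (intro IVT') auto
    then obtain y where "t1 \<le> y" "y \<le> 1 - d/2" "v y = 0" by blast
    then show False using after[of y] \<open>v t1 \<noteq> 0\<close> d by (cases "y = t1") auto
  qed
  obtain \<xi> where "\<xi> \<in> {t1<..<1}" "u 1 - u t1 = v \<xi> * (1 - t1)"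
    using is_sol_mvt[OF sol, of t1 1] t t1 d by auto
  moreover have "u 1 = s" using sol unfolding is_sol_def by simp
  moreover have "0 < v \<xi> * (1 - t1)" using after[of \<xi>] calculation(1) by simp
  ultimately have "u t1 < s" by linarith
  then have "G (u t1) < G s" using G_less_iff s by simp
  moreover have "(v t1)^2 + 2 * lam * G (u t1) = 2 * lam * G s"
    using is_sol_energy[OF sol] t t1 d by auto
  ultimately show False using \<open>v t1 = 0\<close> lam by simp
qed

lemma is_sol_strict_mono:
  assumes lam: "0 < lam" and s: "0 < s" "s < 1" and sol: "is_sol lam s u v {c..1}"
  shows "strict_mono_on {c..1} u"
proof (rule strict_mono_onI)
  fix a b assume "a \<in> {c..1}" "b \<in> {c..1}" "a < b"
  then obtain \<xi> where "\<xi> \<in> {a<..<b}" "u b - u a = v \<xi> * (b - a)"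
    using is_sol_mvt[OF sol] by (metis atLeastAtMost_iff)
  moreover have "0 < v \<xi>" using is_sol_v_pos[OF lam s sol] calculation \<open>a \<in> _\<close> \<open>b \<in> _\<close> by auto
  then have "0 < v \<xi> * (b - a)" using \<open>a < b\<close> by simp
  ultimately show "u a < u b" by linarith
qed

definition orbit_coord :: "real \<Rightarrow> real \<Rightarrow> real" where
  "orbit_coord s x = sqrt (1 - x / s)"

lemma orbit_coord_bounds:
  assumes "0 < s" "0 \<le> x" "x \<le> s"
  shows "0 \<le> orbit_coord s x" "orbit_coord s x \<le> 1"
  using assms unfolding orbit_coord_def by (auto simp: field_simps)

lemma orbit_coord_inverse:
  assumes "0 < s" "x \<le> s"
  shows "s * (1 - (orbit_coord s x)^2) = x"
  using assms unfolding orbit_coord_def by (simp add: field_simps)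

lemma orbit_coord_0 [simp]: "0 < s \<Longrightarrow> orbit_coord s 0 = 1"
  and orbit_coord_self [simp]: "0 < s \<Longrightarrow> orbit_coord s s = 0"
  unfolding orbit_coord_def by simp_all

lemma orbit_coord_deriv:
  assumes "(u has_real_derivative v) (at t within S)" "0 < s" "u t < s"
  shows "((\<lambda>t. orbit_coord s (u t)) has_real_derivative - v / (2 * s * orbit_coord s (u t))) (at t within S)"
proof -
  have "0 < 1 - u t / s" using assms by (simp add: field_simps)
  then have "((\<lambda>t. orbit_coord s (u t)) has_real_derivative
      inverse (sqrt (1 - u t / s)) / 2 * (0 - v / s)) (at t within S)"
    unfolding orbit_coord_def
    by (intro DERIV_chain'[OF _ DERIV_real_sqrt] DERIV_diff DERIV_const DERIV_cdivide assms(1))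
  then show ?thesis unfolding orbit_coord_def using assms(2) by (simp add: field_simps)
qed

lemma is_sol_range:
  assumes lam: "0 < lam" and s: "0 < s" "s < 1" and sol: "is_sol lam s u v {c..1}"
    and uc: "0 \<le> u c" and t: "t \<in> {c..1}"
  shows "0 \<le> u t" "u t \<le> s" "0 \<le> v t"
proof -
  note mono = strict_mono_on_leD[OF is_sol_strict_mono[OF lam s sol]]
  show "0 \<le> u t" using mono[of c t] uc t by auto
  show "u t \<le> s" using mono[of t 1] sol t unfolding is_sol_def by auto
  show "0 \<le> v t" using is_sol_v_pos[OF lam s sol, of t] sol t unfolding is_sol_def by (cases "t = 1") auto
qed

lemma is_sol_velocity:
  assumes lam: "0 < lam" and s: "0 < s" "s < 1" and sol: "is_sol lam s u v {c..1}"
    and uc: "0 \<le> u c" and t: "t \<in> {c..1}"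
  defines "z \<equiv> orbit_coord s (u t)"
  shows "v t = sqrt lam * s * z * sqrt (energy_quot s z)"
proof -
  note range = is_sol_range[OF lam s sol uc t]
  have u: "u t = s * (1 - z^2)" unfolding z_def using orbit_coord_inverse s range by simp
  have "(v t)^2 = 2 * lam * (G s - G (u t))" using is_sol_energy[OF sol t] by (simp add: algebra_simps)
  also have "\<dots> = (sqrt lam * s * z * sqrt (energy_quot s z))^2"
    unfolding u G_diff_energy_quot using lam energy_quot_pos[OF s, of z]
    by (simp add: power_mult_distrib)
  finally show ?thesis
    using range(3) orbit_coord_bounds[OF s(1) range(1,2)] lam s energy_quot_pos[OF s, of z]
    unfolding z_def by (simp add: power2_eq_iff_nonneg)
qed

lemma is_sol_time:
  assumes lam: "0 < lam" and s: "0 < s" "s < 1" and sol: "is_sol lam s u v {c..1}"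
    and "c < 1" and uc: "0 \<le> u c" and t: "t \<in> {c..1}"
  shows "time_primitive s (orbit_coord s (u t)) - time_primitive s 0 = sqrt lam * (1 - t)"
proof -
  define Z where "Z x = orbit_coord s (u x)" for x
  define F where "F x = time_primitive s (Z x) + sqrt lam * x" for x
  note range = is_sol_range[OF lam s sol uc]
  have Z: "0 \<le> Z x" "Z x \<le> 1" if "x \<in> {c..1}" for x
    unfolding Z_def using orbit_coord_bounds[OF s(1)] range[OF that] by auto
  have "(F has_real_derivative 0) (at x within {c..<1})" if x: "x \<in> {c..<1}" for x
  proof -
    have "u x < s" using strict_mono_onD[OF is_sol_strict_mono[OF lam s sol], of x 1] sol x
      unfolding is_sol_def by auto
    moreover have "(u has_real_derivative v x) (at x within {c..<1})"
      using sol x unfolding is_sol_def by (auto intro: DERIV_subset[of _ _ _ "{c..1}"])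
    ultimately have "(Z has_real_derivative - v x / (2 * s * Z x)) (at x within {c..<1})"
      unfolding Z_def using orbit_coord_deriv s by blast
    moreover have "0 < Z x" unfolding Z_def orbit_coord_def using \<open>u x < s\<close> s by (simp add: field_simps)
    ultimately have "(F has_real_derivative
        time_density s (Z x) * (- v x / (2 * s * Z x)) + sqrt lam * 1) (at x within {c..<1})"
      unfolding F_def using time_primitive_deriv[OF s, of "Z x"]
      by (intro DERIV_add DERIV_cmult DERIV_ident DERIV_chain'[of Z]) auto
    moreover have "time_density s (Z x) * (- v x / (2 * s * Z x)) + sqrt lam = 0"
      using is_sol_velocity[OF lam s sol uc, of x] x \<open>0 < Z x\<close> s energy_quot_pos[OF s, of "Z x"]
      unfolding time_density_def Z_def by (simp add: field_simps)
    ultimately show ?thesis by simp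
  qed
  then obtain C where C: "\<And>x. x \<in> {c..<1} \<Longrightarrow> F x = C"
    using has_field_derivative_zero_constant[of "{c..<1}" F] by auto
  have "continuous_on {c..1} Z"
    unfolding Z_def orbit_coord_def using is_sol_continuous_on[OF sol] s by (intro continuous_intros) auto
  moreover have "Z ` {c..1} \<subseteq> {-1..}"
    using Z(1) by (intro image_subsetI) (simp add: order.trans[of "-1" 0])
  ultimately have "continuous_on {c..1} F"
    unfolding F_def by (intro continuous_intros continuous_on_compose2[OF continuous_on_time_primitive[OF s]])
  then have "F x = C" if "x \<in> {c..1}" for x
    using continuous_constant_on_closure[of "{c..<1}" F C x] C \<open>c < 1\<close> that by auto
  moreover have "Z 1 = 0" using sol s unfolding Z_def is_sol_def by simp
  ultimately have "F t = F 1" using t \<open>c < 1\<close> by auto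
  then show ?thesis using \<open>Z 1 = 0\<close> unfolding F_def Z_def by (simp add: algebra_simps)
qed

lemma time_primitive_inverse:
  assumes s: "0 < s" "s < 1"
  obtains \<psi> where "\<And>x. x \<in> {-1..2} \<Longrightarrow> \<psi> (time_primitive s x) = x"
    and "\<And>y. y \<in> {time_primitive s (-1)..time_primitive s 2} \<Longrightarrow> time_primitive s (\<psi> y) = y"
    and "\<And>y. y \<in> {time_primitive s (-1)<..<time_primitive s 2} \<Longrightarrow>
           (\<psi> has_real_derivative inverse (time_density s (\<psi> y))) (at y)"
proof -
  define P where "P = time_primitive s"
  define \<psi> where "\<psi> = inv_into {-1..2} P"
  have cont: "continuous_on {-1..2} P"
    unfolding P_def by (rule continuous_on_subset[OF continuous_on_time_primitive[OF s]]) auto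
  have mono: "strict_mono_on {-1..2} P"
    unfolding P_def by (rule monotone_on_subset[OF time_primitive_strict_mono[OF s]]) auto
  have img: "P ` {-1..2} = {P (-1)..P 2}"
  proof
    show "P ` {-1..2} \<subseteq> {P (-1)..P 2}" using strict_mono_on_leD[OF mono] by auto
    show "{P (-1)..P 2} \<subseteq> P ` {-1..2}"
    proof
      fix y assume "y \<in> {P (-1)..P 2}"
      then obtain x where "-1 \<le> x" "x \<le> 2" "P x = y" using IVT'[of P "-1" y 2] cont by auto
      then show "y \<in> P ` {-1..2}" by auto
    qed
  qed
  have \<psi>P: "\<psi> (P x) = x" if "x \<in> {-1..2}" for x
    unfolding \<psi>_def using that strict_mono_on_imp_inj_on[OF mono] by (simp add: inv_into_f_f)
  have P\<psi>: "P (\<psi> y) = y" if "y \<in> {P (-1)..P 2}" for y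
    unfolding \<psi>_def using that img by (metis f_inv_into_f)
  have range: "\<psi> y \<in> {-1..2}" if "y \<in> {P (-1)..P 2}" for y
    unfolding \<psi>_def using that img by (metis inv_into_into)
  have "continuous_on {P (-1)..P 2} \<psi>"
    using continuous_on_inv[OF cont compact_Icc] \<psi>P img by auto
  then have "isCont \<psi> y" if "y \<in> {P (-1)<..<P 2}" for y
    using continuous_on_interior[of _ \<psi> y] that by auto
  moreover have "(\<psi> has_real_derivative inverse (time_density s (\<psi> y))) (at y)"
    if y: "y \<in> {P (-1)<..<P 2}" and "isCont \<psi> y" for y
  proof (rule DERIV_inverse_function[where f=P and a="P (-1)" and b="P 2"])
    show "(P has_real_derivative time_density s (\<psi> y)) (at (\<psi> y))"
      unfolding P_def using time_primitive_deriv[OF s] range[of y] y by auto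
    show "time_density s (\<psi> y) \<noteq> 0" using time_density_pos[OF s, of "\<psi> y"] by simp
    show "\<And>y. P (-1) < y \<Longrightarrow> y < P 2 \<Longrightarrow> P (\<psi> y) = y" using P\<psi> by auto
  qed (use y \<open>isCont \<psi> y\<close> in auto)
  ultimately have deriv: "(\<psi> has_real_derivative inverse (time_density s (\<psi> y))) (at y)"
    if "y \<in> {P (-1)<..<P 2}" for y
    using that by blast
  show thesis
    by (rule that[OF \<psi>P[unfolded P_def] P\<psi>[unfolded P_def] deriv[unfolded P_def]])
qed

lemma energy_quot_deriv:
  obtains D where "(energy_quot s has_real_derivative D) (at z)"
    and "s * (energy_quot s z + z * D / 2) / 2 = g (s * (1 - z^2))"
proof -
  define D where "D = 2 * s * (- 2 * z * (1 + 2 * (1 - z^2)) / 3 + s * z * (1 + 2 * (1 - z^2) + 3 * (1 - z^2)^2) / 2)"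
  have "(energy_quot s has_real_derivative D) (at z)"
    unfolding energy_quot_def[abs_def] energy_coef_a_def energy_coef_b_def D_def
    by (auto intro!: derivative_eq_intros simp: field_simps power2_eq_square)
  moreover have "s * (energy_quot s z + z * D / 2) / 2 = g (s * (1 - z^2))"
    unfolding energy_quot_def energy_coef_a_def energy_coef_b_def D_def g_def
    by (simp add: field_simps) algebra
  ultimately show thesis by (rule that)
qed

lemma orbit_solves_ode:
  assumes lam: "0 < lam" and s: "0 < s" "s < 1"
    and z: "(z has_real_derivative - sqrt lam * sqrt (energy_quot s (z t)) / 2) (at t)"
  shows "((\<lambda>t. s * (1 - (z t)^2)) has_real_derivative
            sqrt lam * s * z t * sqrt (energy_quot s (z t))) (at t)"
    and "((\<lambda>t. sqrt lam * s * z t * sqrt (energy_quot s (z t))) has_real_derivative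
            - lam * g (s * (1 - (z t)^2))) (at t)"
proof -
  have "((\<lambda>t. s * (1 - (z t)^2)) has_real_derivative
      s * (0 - 2 * z t * (- sqrt lam * sqrt (energy_quot s (z t)) / 2))) (at t)"
    by (auto intro!: derivative_eq_intros z simp: power2_eq_square)
  then show "((\<lambda>t. s * (1 - (z t)^2)) has_real_derivative
      sqrt lam * s * z t * sqrt (energy_quot s (z t))) (at t)"
    by (simp add: algebra_simps)
  obtain D where D: "(energy_quot s has_real_derivative D) (at (z t))"
    and g: "s * (energy_quot s (z t) + z t * D / 2) / 2 = g (s * (1 - (z t)^2))"
    using energy_quot_deriv by metis
  define Q where "Q = sqrt (energy_quot s (z t))"
  have Q: "0 < Q" "Q^2 = energy_quot s (z t)" unfolding Q_def using energy_quot_pos[OF s, of "z t"] by auto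
  have "((\<lambda>t. sqrt (energy_quot s (z t))) has_real_derivative
      inverse Q / 2 * D * (- sqrt lam * Q / 2)) (at t)"
    unfolding Q_def using energy_quot_pos[OF s, of "z t"]
    by (intro DERIV_chain'[OF z] DERIV_chain'[OF D DERIV_real_sqrt]) auto
  from DERIV_cmult[OF DERIV_mult'[OF z this], of "sqrt lam * s"]
  have "((\<lambda>t. sqrt lam * s * (z t * sqrt (energy_quot s (z t)))) has_real_derivative
      sqrt lam * s * (z t * (inverse Q / 2 * D * (- sqrt lam * Q / 2)) + (- sqrt lam * Q / 2) * Q)) (at t)"
    unfolding Q_def .
  moreover have "sqrt lam * s * (z t * (inverse Q / 2 * D * (- sqrt lam * Q / 2)) + (- sqrt lam * Q / 2) * Q)
      = - lam * (s * (Q^2 + z t * D / 2) / 2)"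
  proof -
    have "inverse Q * Q = 1" using Q(1) by simp
    then have "r * s * (z t * (inverse Q / 2 * D * (- r * Q / 2)) + (- r * Q / 2) * Q)
        = - (r * r) * (s * (Q^2 + z t * D / 2) / 2)" for r
      by (simp add: algebra_simps power2_eq_square)
    from this[of "sqrt lam"] show ?thesis using lam by simp
  qed
  moreover have "(\<lambda>t. sqrt lam * s * z t * sqrt (energy_quot s (z t))) =
      (\<lambda>t. sqrt lam * s * (z t * sqrt (energy_quot s (z t))))"
    by (simp add: mult.assoc)
  ultimately show "((\<lambda>t. sqrt lam * s * z t * sqrt (energy_quot s (z t))) has_real_derivative
      - lam * g (s * (1 - (z t)^2))) (at t)"
    using g Q(2) by simp
qed

lemma orbit_coord_ode_solution:
  assumes lam: "0 < lam" and s: "0 < s" "s < 1"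
  defines "T \<equiv> tau s / sqrt lam"
  obtains z where "z 1 = 0" "z (1 - T) = 1"
    "\<And>t. t \<in> {1 - T..1} \<Longrightarrow> (z has_real_derivative - sqrt lam * sqrt (energy_quot s (z t)) / 2) (at t)"
proof -
  obtain \<psi> where \<psi>P: "\<And>x. x \<in> {-1..2} \<Longrightarrow> \<psi> (time_primitive s x) = x"
    and P\<psi>: "\<And>y. y \<in> {time_primitive s (-1)..time_primitive s 2} \<Longrightarrow> time_primitive s (\<psi> y) = y"
    and deriv: "\<And>y. y \<in> {time_primitive s (-1)<..<time_primitive s 2} \<Longrightarrow>
                  (\<psi> has_real_derivative inverse (time_density s (\<psi> y))) (at y)"
    by (erule time_primitive_inverse[OF s])
  define P where "P = time_primitive s"
  note \<psi>P = \<psi>P[folded P_def] and deriv = deriv[folded P_def]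
  have P_less: "P (-1) < P 0" "P 1 < P 2"
    unfolding P_def using strict_mono_onD[OF time_primitive_strict_mono[OF s]] by auto
  have T: "0 < T" "sqrt lam * T = P 1 - P 0"
    unfolding T_def P_def using tau_pos[OF s] tau_eq_time_primitive[OF s] lam by auto
  define z where "z t = \<psi> (P 0 + sqrt lam * (1 - t))" for t
  have "(z has_real_derivative - sqrt lam * sqrt (energy_quot s (z t)) / 2) (at t)"
    if "t \<in> {1 - T..1}" for t
  proof -
    have "P 0 + sqrt lam * (1 - t) \<in> {P 0..P 1}"
      using mult_left_mono[of "1 - t" T "sqrt lam"] that T lam by auto
    moreover have "((\<lambda>t. P 0 + sqrt lam * (1 - t)) has_real_derivative - sqrt lam) (at t)"
      by (auto intro!: derivative_eq_intros)
    ultimately have "(z has_real_derivative inverse (time_density s (z t)) * (- sqrt lam)) (at t)"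
      unfolding z_def using P_less by (intro DERIV_chain'[OF _ deriv]) auto
    moreover have "inverse (time_density s (z t)) * (- sqrt lam) = - sqrt lam * sqrt (energy_quot s (z t)) / 2"
      unfolding time_density_def by simp
    ultimately show ?thesis by (simp only:)
  qed
  moreover have "z 1 = 0" unfolding z_def using \<psi>P[of 0] by simp
  moreover have "z (1 - T) = 1" unfolding z_def using \<psi>P[of 1] T by simp
  ultimately show thesis using that by blast
qed

lemma is_sol_exists:
  assumes lam: "0 < lam" and s: "0 < s" "s < 1"
  defines "T \<equiv> tau s / sqrt lam"
  shows "\<exists>u v. is_sol lam s u v {1 - T..1} \<and> u (1 - T) = 0 \<and> 0 < v (1 - T)"
proof -
  obtain z where z1: "z 1 = 0" and zT: "z (1 - T) = 1"
    and zder: "\<And>t. t \<in> {1 - T..1} \<Longrightarrow> (z has_real_derivative - sqrt lam * sqrt (energy_quot s (z t)) / 2) (at t)"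
    by (erule orbit_coord_ode_solution[OF lam s, folded T_def])
  note ode = orbit_solves_ode[OF lam s zder]
  define u where "u t = s * (1 - (z t)^2)" for t
  define v where "v t = sqrt lam * s * z t * sqrt (energy_quot s (z t))" for t
  have "0 < T" unfolding T_def using tau_pos[OF s] lam by simp
  have "is_sol lam s u v {1 - T..1}"
    unfolding is_sol_def
  proof (intro conjI ballI)
    show "is_interval {1 - T..1}" by (rule is_interval_cc)
    show "1 \<in> {1 - T..1}" using \<open>0 < T\<close> by simp
    show "u 1 = s" "v 1 = 0" unfolding u_def v_def z1 by simp_all
    fix t assume t: "t \<in> {1 - T..1}"
    show "(u has_real_derivative v t) (at t within {1 - T..1})"
      unfolding u_def[abs_def] v_def using has_field_derivative_at_within[OF ode(1)[OF t]] .
    show "(v has_real_derivative - lam * g (u t)) (at t within {1 - T..1})"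
      unfolding v_def[abs_def] u_def using has_field_derivative_at_within[OF ode(2)[OF t]] .
  qed
  moreover have "u (1 - T) = 0" "0 < v (1 - T)"
    unfolding u_def v_def zT using lam s energy_quot_pos[OF s] by auto
  ultimately show ?thesis by blast
qed

lemma is_sol_axis_time:
  assumes lam: "0 < lam" and s: "0 < s" "s < 1" and "0 < t"
    and sol: "is_sol lam s u v {1 - t..1}" and u: "u (1 - t) = 0"
  shows "t = tau s / sqrt lam"
proof -
  have "time_primitive s 1 - time_primitive s 0 = sqrt lam * t"
    using is_sol_time[OF lam s sol, of "1 - t"] \<open>0 < t\<close> u s by simp
  then show ?thesis using tau_eq_time_primitive[OF s] lam by (simp add: field_simps)
qed

lemma T0hat_eq:
  assumes lam: "0 < lam" and s: "0 < s" "s < 1"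
  shows "T0hat lam s = tau s / sqrt lam"
proof -
  have "{t. 0 < t \<and> (\<exists>u v. is_sol lam s u v {1 - t..1} \<and> u (1 - t) = 0 \<and> 0 < v (1 - t))} =
      {tau s / sqrt lam}"
  proof (intro equalityI subsetI)
    fix t assume "t \<in> {t. 0 < t \<and> (\<exists>u v. is_sol lam s u v {1 - t..1} \<and> u (1 - t) = 0 \<and> 0 < v (1 - t))}"
    then obtain u v where "0 < t" "is_sol lam s u v {1 - t..1}" "u (1 - t) = 0" by blast
    then show "t \<in> {tau s / sqrt lam}" using is_sol_axis_time[OF lam s] by simp
  next
    fix t assume "t \<in> {tau s / sqrt lam}"
    then show "t \<in> {t. 0 < t \<and> (\<exists>u v. is_sol lam s u v {1 - t..1} \<and> u (1 - t) = 0 \<and> 0 < v (1 - t))}"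
      using is_sol_exists[OF lam s] tau_pos[OF s] lam by simp
  qed
  then show ?thesis unfolding T0hat_def by simp
qed

lemma I1_iff:
  assumes "0 < lam"
  shows "s \<in> I1 lam \<sigma> \<longleftrightarrow> s \<in> {0<..<1} \<and> sqrt lam * \<sigma> < tau s"
proof -
  have "sqrt lam * \<sigma> < tau s \<longleftrightarrow> \<sigma> < tau s / sqrt lam" using assms by (simp add: field_simps)
  then show ?thesis unfolding I1_def using T0hat_eq[OF assms] by auto
qed

section \<open>The closure of \<open>Gamma1\<close> on the axis\<close>

lemma is_sol_orbit_point:
  assumes lam: "0 < lam" and s: "0 < s" "s < 1" and "0 < \<sigma>"
    and sol: "is_sol lam s u v {1 - \<sigma>..1}" and u: "0 \<le> u (1 - \<sigma>)"
  shows "u (1 - \<sigma>) \<le> s"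
    and "v (1 - \<sigma>) = sqrt (2 * lam * (G s - G (u (1 - \<sigma>))))"
    and "time_primitive s (orbit_coord s (u (1 - \<sigma>))) - time_primitive s 0 = sqrt lam * \<sigma>"
proof -
  have t: "1 - \<sigma> \<in> {1 - \<sigma>..1}" using \<open>0 < \<sigma>\<close> by simp
  show "u (1 - \<sigma>) \<le> s" using is_sol_range[OF lam s sol u t] by simp
  have "(v (1 - \<sigma>))^2 = 2 * lam * (G s - G (u (1 - \<sigma>)))"
    using is_sol_energy[OF sol t] by (simp add: algebra_simps)
  then show "v (1 - \<sigma>) = sqrt (2 * lam * (G s - G (u (1 - \<sigma>))))"
    using is_sol_range[OF lam s sol u t] by (metis real_sqrt_unique)
  show "time_primitive s (orbit_coord s (u (1 - \<sigma>))) - time_primitive s 0 = sqrt lam * \<sigma>"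
    using is_sol_time[OF lam s sol _ u t] \<open>0 < \<sigma>\<close> by simp
qed

text \<open>A solution crossing \<open>u = 0\<close> before time \<open>1 - \<sigma>\<close> would reach the axis in time less
  than \<open>T0hat\<close>, so points of \<open>Gamma1\<close> have \<open>u \<ge> 0\<close>.\<close>
lemma Gamma1_elim:
  assumes lam: "0 < lam" and "0 < \<sigma>" and p: "(x, y) \<in> Gamma1 lam \<sigma>"
  obtains s where "s \<in> {0<..<1}" "sqrt lam * \<sigma> < tau s" "0 \<le> x" "x \<le> s"
    "y = sqrt (2 * lam * (G s - G x))"
    "time_primitive s (orbit_coord s x) - time_primitive s 0 = sqrt lam * \<sigma>"
proof -
  obtain s u v where "s \<in> I1 lam \<sigma>" and sol: "is_sol lam s u v {1 - \<sigma>..1}"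
    and xy: "x = u (1 - \<sigma>)" "y = v (1 - \<sigma>)"
    using p unfolding Gamma1_def by auto
  then have s: "0 < s" "s < 1" "sqrt lam * \<sigma> < tau s" using I1_iff[OF lam] by auto
  have "0 \<le> u (1 - \<sigma>)"
  proof (rule ccontr)
    assume "\<not> 0 \<le> u (1 - \<sigma>)"
    moreover have "u 1 = s" using sol unfolding is_sol_def by simp
    ultimately have "\<exists>t\<ge>1 - \<sigma>. t \<le> 1 \<and> u t = 0"
      using s \<open>0 < \<sigma>\<close> is_sol_continuous_on(1)[OF sol] by (intro IVT') auto
    then obtain t where t: "1 - \<sigma> \<le> t" "t \<le> 1" "u t = 0" by blast
    then have "t < 1" using \<open>u 1 = s\<close> s by (cases "t = 1") auto
    have "is_sol lam s u v {1 - (1 - t)..1}" using is_sol_restrict[OF sol t(1,2)] by simp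
    then have "1 - t = tau s / sqrt lam"
      using is_sol_axis_time[OF lam s(1,2)] \<open>t < 1\<close> t(3) by simp
    moreover have "\<sigma> < tau s / sqrt lam" using s(3) lam by (simp add: field_simps)
    ultimately show False using t(1) by linarith
  qed
  note point = is_sol_orbit_point[OF lam s(1,2) \<open>0 < \<sigma>\<close> sol this]
  show thesis
  proof (rule that)
    show "s \<in> {0<..<1}" using s by simp
    show "0 \<le> x" "x \<le> s" using \<open>0 \<le> u (1 - \<sigma>)\<close> point(1) xy by simp_all
  qed (use s(3) point(2,3) xy in simp_all)
qed

lemma Gamma1_intro:
  assumes lam: "0 < lam" and "0 < \<sigma>" and s: "s \<in> {0<..<1}" "sqrt lam * \<sigma> < tau s"
  obtains x where "0 \<le> x" "x \<le> s" "(x, sqrt (2 * lam * (G s - G x))) \<in> Gamma1 lam \<sigma>"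
    "time_primitive s (orbit_coord s x) - time_primitive s 0 = sqrt lam * \<sigma>"
proof -
  have s': "0 < s" "s < 1" using s by auto
  define T where "T = tau s / sqrt lam"
  have "\<sigma> < T" unfolding T_def using s lam by (simp add: field_simps)
  obtain u v where sol: "is_sol lam s u v {1 - T..1}" and "u (1 - T) = 0"
    using is_sol_exists[OF lam s'] unfolding T_def by blast
  have sol': "is_sol lam s u v {1 - \<sigma>..1}"
    using is_sol_restrict[OF sol] \<open>\<sigma> < T\<close> \<open>0 < \<sigma>\<close> by simp
  have "0 \<le> u (1 - \<sigma>)"
    using strict_mono_on_leD[OF is_sol_strict_mono[OF lam s' sol], of "1 - T" "1 - \<sigma>"]
      \<open>u (1 - T) = 0\<close> \<open>\<sigma> < T\<close> \<open>0 < \<sigma>\<close> by simp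
  moreover have "s \<in> I1 lam \<sigma>" using I1_iff[OF lam] s by simp
  then have "(u (1 - \<sigma>), v (1 - \<sigma>)) \<in> Gamma1 lam \<sigma>" unfolding Gamma1_def using sol' by blast
  ultimately show thesis
    using is_sol_orbit_point[OF lam s' \<open>0 < \<sigma>\<close> sol' \<open>0 \<le> u (1 - \<sigma>)\<close>]
    by (intro that[of "u (1 - \<sigma>)"]) simp_all
qed

lemma Gamma1_seq_intro:
  assumes lam: "0 < lam" and "0 < \<sigma>"
    and S: "\<And>n. S n \<in> {0<..<1}" "\<And>n. sqrt lam * \<sigma> < tau (S n)"
  obtains X where "\<And>n. 0 \<le> X n" "\<And>n. X n \<le> S n"
    "\<And>n. (X n, sqrt (2 * lam * (G (S n) - G (X n)))) \<in> Gamma1 lam \<sigma>"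
    "\<And>n. time_primitive (S n) (orbit_coord (S n) (X n)) - time_primitive (S n) 0 = sqrt lam * \<sigma>"
proof -
  have "\<forall>n. \<exists>x. 0 \<le> x \<and> x \<le> S n \<and> (x, sqrt (2 * lam * (G (S n) - G x))) \<in> Gamma1 lam \<sigma> \<and>
      time_primitive (S n) (orbit_coord (S n) x) - time_primitive (S n) 0 = sqrt lam * \<sigma>"
  proof
    fix n
    obtain x where x: "0 \<le> x" "x \<le> S n" "(x, sqrt (2 * lam * (G (S n) - G x))) \<in> Gamma1 lam \<sigma>"
      "time_primitive (S n) (orbit_coord (S n) x) - time_primitive (S n) 0 = sqrt lam * \<sigma>"
      by (rule Gamma1_intro[OF lam \<open>0 < \<sigma>\<close> S(1)[of n] S(2)[of n]])
    show "\<exists>x. 0 \<le> x \<and> x \<le> S n \<and> (x, sqrt (2 * lam * (G (S n) - G x))) \<in> Gamma1 lam \<sigma> \<and>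
      time_primitive (S n) (orbit_coord (S n) x) - time_primitive (S n) 0 = sqrt lam * \<sigma>"
      by (intro exI[of _ x] conjI x)
  qed
  from choice[OF this] obtain X where "\<forall>n. 0 \<le> X n \<and> X n \<le> S n \<and>
      (X n, sqrt (2 * lam * (G (S n) - G (X n)))) \<in> Gamma1 lam \<sigma> \<and>
      time_primitive (S n) (orbit_coord (S n) (X n)) - time_primitive (S n) 0 = sqrt lam * \<sigma>"
    by blast
  then show thesis by (intro that[of X]) simp_all
qed

lemma continuous_on_tau: "continuous_on {0<..<1} tau"
  using convex_on_continuous[OF open_greaterThanLessThan strict_convex_on_imp_convex_on[OF tau_strict_convex]] .

lemma tendsto_tau: "S \<longlonglongrightarrow> s \<Longrightarrow> s \<in> {0<..<1} \<Longrightarrow> (\<lambda>n. tau (S n)) \<longlonglongrightarrow> tau s"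
  using continuous_on_tau by (intro isCont_tendsto_compose[of s tau]) (auto simp: continuous_on_eq_continuous_at)

lemma axis_point_in_closure_Gamma1:
  assumes lam: "0 < lam" and "0 < \<sigma>" and s: "s \<in> {0<..<1}" "tau s = sqrt lam * \<sigma>"
    and approx: "s \<in> closure {x \<in> {0<..<1}. sqrt lam * \<sigma> < tau x}"
  shows "(0, sqrt (2 * lam * G s)) \<in> closure (Gamma1 lam \<sigma>)"
proof -
  obtain S where S: "\<And>n. S n \<in> {0<..<1}" "\<And>n. sqrt lam * \<sigma> < tau (S n)" and "S \<longlonglongrightarrow> s"
    using approx unfolding closure_sequential by blast
  obtain X where X: "\<And>n. 0 \<le> X n" "\<And>n. X n \<le> S n"
    "\<And>n. (X n, sqrt (2 * lam * (G (S n) - G (X n)))) \<in> Gamma1 lam \<sigma>"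
    "\<And>n. time_primitive (S n) (orbit_coord (S n) (X n)) - time_primitive (S n) 0 = sqrt lam * \<sigma>"
    by (erule Gamma1_seq_intro[OF lam \<open>0 < \<sigma>\<close> S(1) S(2)])
  define Z where "Z n = orbit_coord (S n) (X n)" for n
  have Z: "0 \<le> Z n" "Z n \<le> 1" for n
    unfolding Z_def using orbit_coord_bounds[of "S n" "X n"] S(1)[of n] X(1)[of n] X(2)[of n] by auto
  have gap: "1 - Z n \<le> tau (S n) - sqrt lam * \<sigma>" for n
  proof -
    have "1 - Z n \<le> time_primitive (S n) 1 - time_primitive (S n) (Z n)"
      using time_primitive_diff_ge[of "S n" "Z n" 1] S(1)[of n] Z by auto
    moreover have "tau (S n) = time_primitive (S n) 1 - time_primitive (S n) 0"
      using tau_eq_time_primitive S(1)[of n] by auto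
    ultimately show ?thesis using X(4)[of n] unfolding Z_def by linarith
  qed
  have "(\<lambda>n. tau (S n) - sqrt lam * \<sigma>) \<longlonglongrightarrow> 0"
    using tendsto_diff[OF tendsto_tau[OF \<open>S \<longlonglongrightarrow> s\<close> s(1)] tendsto_const[of "sqrt lam * \<sigma>"]] s(2) by simp
  then have "(\<lambda>n. 1 - Z n) \<longlonglongrightarrow> 0"
    by (rule tendsto_sandwich[rotated 2, OF tendsto_const]) (use gap Z in auto)
  then have "Z \<longlonglongrightarrow> 1"
    using tendsto_diff[OF tendsto_const[of 1], of "\<lambda>n. 1 - Z n" 0] by simp
  then have "(\<lambda>n. S n * (1 - (Z n)^2)) \<longlonglongrightarrow> s * (1 - 1^2)"
    by (intro tendsto_intros \<open>S \<longlonglongrightarrow> s\<close>)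
  moreover have "S n * (1 - (Z n)^2) = X n" for n
    unfolding Z_def using orbit_coord_inverse[of "S n" "X n"] S(1) X(2) by simp
  ultimately have "X \<longlonglongrightarrow> 0" by simp
  then have "(\<lambda>n. (X n, sqrt (2 * lam * (G (S n) - G (X n))))) \<longlonglongrightarrow> (0, sqrt (2 * lam * (G s - G 0)))"
    by (intro tendsto_intros \<open>S \<longlonglongrightarrow> s\<close> isCont_tendsto_compose[OF isCont_G])
  then show ?thesis unfolding closure_sequential using X(3) by fastforce
qed

text \<open>The gap \<open>tau s - sqrt lam * \<sigma>\<close> is the time still needed to reach the axis, which is
  \<open>O(1 - z)\<close> near \<open>z = 1\<close> as long as \<open>s\<close> stays away from \<open>0\<close>.\<close>
lemma tau_tendsto_on_Gamma1:
  assumes S: "\<And>n. S n \<in> {0<..<1}" and X: "\<And>n. 0 \<le> X n" "\<And>n. X n \<le> S n"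
    and time: "\<And>n. time_primitive (S n) (orbit_coord (S n) (X n)) - time_primitive (S n) 0 = c"
    and "S \<longlonglongrightarrow> l" "0 < l" "X \<longlonglongrightarrow> 0"
  shows "(\<lambda>n. tau (S n)) \<longlonglongrightarrow> c"
proof -
  define Z where "Z n = orbit_coord (S n) (X n)" for n
  have Z: "0 \<le> Z n" "Z n \<le> 1" for n
    unfolding Z_def using orbit_coord_bounds[of "S n" "X n"] S[of n] X(1)[of n] X(2)[of n] by auto
  have gap: "tau (S n) - c = time_primitive (S n) 1 - time_primitive (S n) (Z n)" for n
  proof -
    have "tau (S n) = time_primitive (S n) 1 - time_primitive (S n) 0"
      using tau_eq_time_primitive[of "S n"] S[of n] by auto
    then show ?thesis using time[of n] unfolding Z_def by linarith
  qed
  have "(\<lambda>n. sqrt (1 - X n / S n)) \<longlonglongrightarrow> sqrt (1 - 0 / l)"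
    by (intro tendsto_intros \<open>S \<longlonglongrightarrow> l\<close> \<open>X \<longlonglongrightarrow> 0\<close>) (use \<open>0 < l\<close> in auto)
  then have "Z \<longlonglongrightarrow> 1" unfolding Z_def orbit_coord_def by simp
  define K where "K = 2 / sqrt (l / 48)"
  have "\<forall>\<^sub>F n in sequentially. l / 2 < S n"
    using order_tendstoD(1)[OF \<open>S \<longlonglongrightarrow> l\<close>, of "l / 2"] \<open>0 < l\<close> by simp
  moreover have "\<forall>\<^sub>F n in sequentially. 1 / 2 < Z n"
    using order_tendstoD(1)[OF \<open>Z \<longlonglongrightarrow> 1\<close>, of "1 / 2"] by simp
  ultimately have upper: "\<forall>\<^sub>F n in sequentially. tau (S n) - c \<le> K * (1 - Z n)"
  proof eventually_elim
    case (elim n)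
    have "tau (S n) - c \<le> 2 / sqrt (S n / 24) * (1 - Z n)"
      unfolding gap using time_primitive_diff_le[of "S n" "Z n" 1] S Z elim by auto
    also have "\<dots> \<le> K * (1 - Z n)"
      unfolding K_def using elim Z \<open>0 < l\<close>
      by (intro mult_right_mono divide_left_mono real_sqrt_le_mono) auto
    finally show ?case .
  qed
  have lower: "\<forall>\<^sub>F n in sequentially. 0 \<le> tau (S n) - c"
  proof (intro always_eventually allI)
    fix n
    have "1 - Z n \<le> time_primitive (S n) 1 - time_primitive (S n) (Z n)"
      using time_primitive_diff_ge[of "S n" "Z n" 1] S[of n] Z[of n] by auto
    then show "0 \<le> tau (S n) - c" unfolding gap using Z(2)[of n] by linarith
  qed
  have "(\<lambda>n. K * (1 - Z n)) \<longlonglongrightarrow> 0"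
    using tendsto_mult[OF tendsto_const[of K] tendsto_diff[OF tendsto_const[of 1] \<open>Z \<longlonglongrightarrow> 1\<close>]] by simp
  then have "(\<lambda>n. tau (S n) - c) \<longlonglongrightarrow> 0"
    by (rule tendsto_sandwich[OF lower upper tendsto_const])
  then have "(\<lambda>n. (tau (S n) - c) + c) \<longlonglongrightarrow> 0 + c" by (intro tendsto_add tendsto_const)
  then show ?thesis by simp
qed

lemma tendsto_tau_limit_less_1:
  assumes "\<And>n. S n < 1" "S \<longlonglongrightarrow> l" "(\<lambda>n. tau (S n)) \<longlonglongrightarrow> c"
  shows "l < 1"
proof (rule ccontr)
  assume "\<not> l < 1"
  moreover have "l \<le> 1" using assms(1,2) by (intro LIMSEQ_le_const2) (auto intro: less_imp_le)
  ultimately have "filterlim S (at_left 1) sequentially"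
    using assms(1,2) by (auto intro: tendsto_imp_filterlim_at_left)
  then have "filterlim (\<lambda>n. tau (S n)) at_top sequentially"
    by (rule filterlim_compose[OF tau_at_left_1])
  then show False
    using not_tendsto_and_filterlim_at_infinity[OF _ assms(3)] filterlim_at_top_imp_at_infinity by auto
qed

lemma Gamma1_seq_elim:
  assumes lam: "0 < lam" and "0 < \<sigma>" and p: "\<And>n. (X n, Y n) \<in> Gamma1 lam \<sigma>"
  obtains S where "\<And>n. S n \<in> {0<..<1}" "\<And>n. 0 \<le> X n" "\<And>n. X n \<le> S n"
    "\<And>n. Y n = sqrt (2 * lam * (G (S n) - G (X n)))"
    "\<And>n. time_primitive (S n) (orbit_coord (S n) (X n)) - time_primitive (S n) 0 = sqrt lam * \<sigma>"
proof -
  have "\<forall>n. \<exists>s. s \<in> {0<..<1} \<and> 0 \<le> X n \<and> X n \<le> s \<and> Y n = sqrt (2 * lam * (G s - G (X n))) \<and>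
      time_primitive s (orbit_coord s (X n)) - time_primitive s 0 = sqrt lam * \<sigma>"
  proof
    fix n
    obtain s where s: "s \<in> {0<..<1}" "sqrt lam * \<sigma> < tau s" "0 \<le> X n" "X n \<le> s"
      "Y n = sqrt (2 * lam * (G s - G (X n)))"
      "time_primitive s (orbit_coord s (X n)) - time_primitive s 0 = sqrt lam * \<sigma>"
      by (rule Gamma1_elim[OF lam \<open>0 < \<sigma>\<close> p[of n]])
    show "\<exists>s. s \<in> {0<..<1} \<and> 0 \<le> X n \<and> X n \<le> s \<and> Y n = sqrt (2 * lam * (G s - G (X n))) \<and>
        time_primitive s (orbit_coord s (X n)) - time_primitive s 0 = sqrt lam * \<sigma>"
      by (intro exI[of _ s] conjI s)
  qed
  from choice[OF this] obtain S where "\<forall>n. S n \<in> {0<..<1} \<and> 0 \<le> X n \<and> X n \<le> S n \<and>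
      Y n = sqrt (2 * lam * (G (S n) - G (X n))) \<and>
      time_primitive (S n) (orbit_coord (S n) (X n)) - time_primitive (S n) 0 = sqrt lam * \<sigma>"
    by blast
  then show thesis by (intro that[of S]) simp_all
qed

text \<open>Along a sequence of \<open>Gamma1\<close> converging to \<open>(0, \<xi>)\<close>, energy conservation pins down
  \<open>G\<close> of the limit of the initial data, which is therefore positive; then the time gap closes.\<close>
lemma axis_point_of_closure_Gamma1:
  assumes lam: "0 < lam" and "0 < \<sigma>" and "0 < \<xi>" and cl: "(0, \<xi>) \<in> closure (Gamma1 lam \<sigma>)"
  obtains s where "s \<in> {0<..<1}" "tau s = sqrt lam * \<sigma>" "\<xi> = sqrt (2 * lam * G s)"
proof -
  obtain p where p: "\<And>n. p n \<in> Gamma1 lam \<sigma>" and "p \<longlonglongrightarrow> (0, \<xi>)"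
    using cl unfolding closure_sequential by blast
  have p': "(fst (p n), snd (p n)) \<in> Gamma1 lam \<sigma>" for n using p[of n] by simp
  obtain S where S: "\<And>n. S n \<in> {0<..<1}" and X: "\<And>n. 0 \<le> fst (p n)" "\<And>n. fst (p n) \<le> S n"
    and Y: "\<And>n. snd (p n) = sqrt (2 * lam * (G (S n) - G (fst (p n))))"
    and time: "\<And>n. time_primitive (S n) (orbit_coord (S n) (fst (p n))) - time_primitive (S n) 0 = sqrt lam * \<sigma>"
    by (erule Gamma1_seq_elim[OF lam \<open>0 < \<sigma>\<close> p'])
  have S01: "\<forall>n. S n \<in> {0..1}"
  proof
    fix n show "S n \<in> {0..1}" using S[of n] by simp
  qed
  obtain l r where "l \<in> {0..1}" "strict_mono r" and "(S \<circ> r) \<longlonglongrightarrow> l"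
    by (erule seq_compactE[OF compact_imp_seq_compact[OF compact_Icc] S01])
  define X' where "X' n = fst (p (r n))" for n
  have "X' \<longlonglongrightarrow> 0" "(\<lambda>n. snd (p (r n))) \<longlonglongrightarrow> \<xi>"
    using LIMSEQ_subseq_LIMSEQ[OF tendsto_fst[OF \<open>p \<longlonglongrightarrow> _\<close>] \<open>strict_mono r\<close>]
      LIMSEQ_subseq_LIMSEQ[OF tendsto_snd[OF \<open>p \<longlonglongrightarrow> _\<close>] \<open>strict_mono r\<close>]
    unfolding X'_def comp_def by simp_all
  have energy: "G (S (r n)) = G (X' n) + (snd (p (r n)))^2 / (2 * lam)" for n
  proof -
    have "G (X' n) \<le> G (S (r n))"
      unfolding X'_def using G_less_iff[of "S (r n)" "fst (p (r n))"] S[of "r n"] X(2)[of "r n"] by fastforce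
    then show ?thesis unfolding Y X'_def using lam by simp
  qed
  have "(\<lambda>n. G (X' n) + (snd (p (r n)))^2 / (2 * lam)) \<longlonglongrightarrow> G 0 + \<xi>^2 / (2 * lam)"
    by (intro tendsto_intros isCont_tendsto_compose[OF isCont_G] \<open>X' \<longlonglongrightarrow> 0\<close> \<open>(\<lambda>n. snd (p (r n))) \<longlonglongrightarrow> \<xi>\<close>)
      (use lam in simp)
  moreover have "(\<lambda>n. G (S (r n))) \<longlonglongrightarrow> G l"
    using isCont_tendsto_compose[OF isCont_G \<open>(S \<circ> r) \<longlonglongrightarrow> l\<close>] by (simp add: comp_def)
  ultimately have Gl: "G l = \<xi>^2 / (2 * lam)"
    unfolding energy using LIMSEQ_unique by fastforce
  then have "0 < l" using \<open>l \<in> {0..1}\<close> \<open>0 < \<xi>\<close> lam by (cases "l = 0") auto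
  have "(\<lambda>n. tau ((S \<circ> r) n)) \<longlonglongrightarrow> sqrt lam * \<sigma>"
    by (rule tau_tendsto_on_Gamma1[of "S \<circ> r" X', OF _ _ _ _ \<open>(S \<circ> r) \<longlonglongrightarrow> l\<close> \<open>0 < l\<close> \<open>X' \<longlonglongrightarrow> 0\<close>])
      (use S in \<open>simp_all add: X'_def X time\<close>)
  then have tau_lim: "(\<lambda>n. tau (S (r n))) \<longlonglongrightarrow> sqrt lam * \<sigma>" by (simp add: comp_def)
  then have "l < 1"
    using tendsto_tau_limit_less_1[of "S \<circ> r"] \<open>(S \<circ> r) \<longlonglongrightarrow> l\<close> S by (auto simp: comp_def)
  then have "(\<lambda>n. tau (S (r n))) \<longlonglongrightarrow> tau l"
    using tendsto_tau[OF \<open>(S \<circ> r) \<longlonglongrightarrow> l\<close>] \<open>0 < l\<close> by (simp add: comp_def)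
  then have "tau l = sqrt lam * \<sigma>" using tau_lim by (rule LIMSEQ_unique)
  moreover have "\<xi> = sqrt (2 * lam * G l)" using Gl \<open>0 < \<xi>\<close> lam by simp
  ultimately show thesis using that \<open>0 < l\<close> \<open>l < 1\<close> by simp
qed

definition axis_height :: "real \<Rightarrow> real \<Rightarrow> real" where
  "axis_height lam s = sqrt (2 * lam * G s)"

lemma axis_height_pos: "0 < lam \<Longrightarrow> 0 < s \<Longrightarrow> s \<le> 1 \<Longrightarrow> 0 < axis_height lam s"
  unfolding axis_height_def using G_pos by simp

lemma axis_height_less:
  "0 < lam \<Longrightarrow> s1 < s2 \<Longrightarrow> s2 \<le> 1 \<Longrightarrow> axis_height lam s1 < axis_height lam s2"
  unfolding axis_height_def using G_less_iff[of s1 s2] by simp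

lemma closure_Gamma1_axis:
  assumes lam: "0 < lam" and "0 < \<sigma>"
  shows "closure (Gamma1 lam \<sigma>) \<inter> ({0} \<times> {0<..}) =
    (\<lambda>s. (0, axis_height lam s)) ` {s \<in> {0<..<1}. tau s = sqrt lam * \<sigma>}"
  unfolding axis_height_def
proof (intro equalityI subsetI)
  fix q assume q: "q \<in> closure (Gamma1 lam \<sigma>) \<inter> ({0} \<times> {0<..})"
  then obtain \<xi> where "q = (0, \<xi>)" "0 < \<xi>" by auto
  with q obtain s where "s \<in> {0<..<1}" "tau s = sqrt lam * \<sigma>" "\<xi> = sqrt (2 * lam * G s)"
    using axis_point_of_closure_Gamma1[OF lam \<open>0 < \<sigma>\<close> \<open>0 < \<xi>\<close>] by blast
  then show "q \<in> (\<lambda>s. (0, sqrt (2 * lam * G s))) ` {s \<in> {0<..<1}. tau s = sqrt lam * \<sigma>}"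
    using \<open>q = (0, \<xi>)\<close> by blast
next
  fix q assume "q \<in> (\<lambda>s. (0::real, sqrt (2 * lam * G s))) ` {s \<in> {0<..<1}. tau s = sqrt lam * \<sigma>}"
  then obtain s where s: "s \<in> {0<..<1}" "tau s = sqrt lam * \<sigma>" and q: "q = (0, sqrt (2 * lam * G s))"
    by blast
  obtain s0 where "valley tau 0 1 s0" by (rule tau_valley)
  then have "s \<in> closure {x \<in> {0<..<1}. sqrt lam * \<sigma> < tau x}"
    using valley.in_closure_above[of tau 0 1 s0 s] s by simp
  then have "q \<in> closure (Gamma1 lam \<sigma>)"
    unfolding q by (rule axis_point_in_closure_Gamma1[OF lam \<open>0 < \<sigma>\<close> s])
  moreover have "0 < sqrt (2 * lam * G s)" using G_pos[of s] s lam by simp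
  ultimately show "q \<in> closure (Gamma1 lam \<sigma>) \<inter> ({0} \<times> {0<..})" using q by simp
qed

lemma closure_Gamma1_axis_cases:
  assumes V: "valley tau 0 1 s0" and lam: "0 < lam" and "0 < \<sigma>"
  shows "sqrt lam * \<sigma> < tau s0 \<Longrightarrow> closure (Gamma1 lam \<sigma>) \<inter> ({0} \<times> {0<..}) = {}"
    and "sqrt lam * \<sigma> = tau s0 \<Longrightarrow>
      \<exists>\<xi>>0. closure (Gamma1 lam \<sigma>) \<inter> ({0} \<times> {0<..}) = {(0, \<xi>)}"
    and "tau s0 < sqrt lam * \<sigma> \<Longrightarrow> \<exists>\<xi>0 \<xi>1. 0 < \<xi>0 \<and> \<xi>0 < \<xi>1 \<and>
      closure (Gamma1 lam \<sigma>) \<inter> ({0} \<times> {0<..}) = {(0, \<xi>0), (0, \<xi>1)}"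
proof -
  note axis = closure_Gamma1_axis[OF lam \<open>0 < \<sigma>\<close>]
  have s0: "0 < s0" "s0 \<le> 1" using valley.s0[OF V] by auto
  show "closure (Gamma1 lam \<sigma>) \<inter> ({0} \<times> {0<..}) = {}" if "sqrt lam * \<sigma> < tau s0"
    using axis valley.level_below_min[OF V that] by simp
  show "\<exists>\<xi>>0. closure (Gamma1 lam \<sigma>) \<inter> ({0} \<times> {0<..}) = {(0, \<xi>)}" if "sqrt lam * \<sigma> = tau s0"
  proof (intro exI[of _ "axis_height lam s0"] conjI)
    show "0 < axis_height lam s0" using axis_height_pos[OF lam s0] .
    show "closure (Gamma1 lam \<sigma>) \<inter> ({0} \<times> {0<..}) = {(0, axis_height lam s0)}"
      using axis valley.level_min[OF V] that by simp
  qed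
  assume "tau s0 < sqrt lam * \<sigma>"
  then obtain s1 s2 where "s1 < s2" and level: "{s \<in> {0<..<1}. tau s = sqrt lam * \<sigma>} = {s1, s2}"
    by (erule valley.level_above_min[OF V])
  have "s1 \<in> {s \<in> {0<..<1}. tau s = sqrt lam * \<sigma>}" "s2 \<in> {s \<in> {0<..<1}. tau s = sqrt lam * \<sigma>}"
    unfolding level by simp_all
  then have "0 < s1" "s1 \<le> 1" "s2 \<le> 1" by simp_all
  then show "\<exists>\<xi>0 \<xi>1. 0 < \<xi>0 \<and> \<xi>0 < \<xi>1 \<and>
      closure (Gamma1 lam \<sigma>) \<inter> ({0} \<times> {0<..}) = {(0, \<xi>0), (0, \<xi>1)}"
    using axis level axis_height_pos[OF lam, of s1] axis_height_less[OF lam \<open>s1 < s2\<close>]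
    by (intro exI[of _ "axis_height lam s1"] exI[of _ "axis_height lam s2"]) simp
qed

theorem corollary2p2:
  fixes \<sigma> :: real
  assumes "0 < \<sigma>" and "\<sigma> < 1/2"
  shows "\<exists>ls>0.
    (\<forall>lam. 0 < lam \<and> lam < ls \<longrightarrow> closure (Gamma1 lam \<sigma>) \<inter> ({0} \<times> {0<..}) = {}) \<and>
    (\<exists>\<xi>>0. closure (Gamma1 ls \<sigma>) \<inter> ({0} \<times> {0<..}) = {(0, \<xi>)}) \<and>
    (\<forall>lam>ls. \<exists>\<xi>0 \<xi>1. 0 < \<xi>0 \<and> \<xi>0 < \<xi>1 \<and>
        closure (Gamma1 lam \<sigma>) \<inter> ({0} \<times> {0<..}) = {(0, \<xi>0), (0, \<xi>1)})"
proof -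
  obtain s0 where V: "valley tau 0 1 s0" by (rule tau_valley)
  define ls where "ls = (tau s0 / \<sigma>)^2"
  have "0 < tau s0" using tau_pos valley.s0[OF V] by simp
  then have "0 < ls" "tau s0 = sqrt ls * \<sigma>" unfolding ls_def using \<open>0 < \<sigma>\<close> by simp_all
  then have compare: "sqrt lam * \<sigma> < tau s0 \<longleftrightarrow> lam < ls" "sqrt lam * \<sigma> = tau s0 \<longleftrightarrow> lam = ls"
    if "0 < lam" for lam
    using \<open>0 < \<sigma>\<close> that by simp_all
  note cases = closure_Gamma1_axis_cases[OF V _ \<open>0 < \<sigma>\<close>]
  show ?thesis
  proof (rule exI[of _ ls], intro conjI allI impI)
    show "0 < ls" by fact
    show "\<exists>\<xi>>0. closure (Gamma1 ls \<sigma>) \<inter> ({0} \<times> {0<..}) = {(0, \<xi>)}"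
      using cases(2)[OF \<open>0 < ls\<close>] compare(2)[OF \<open>0 < ls\<close>] by simp
  next
    fix lam assume "0 < lam \<and> lam < ls"
    then show "closure (Gamma1 lam \<sigma>) \<inter> ({0} \<times> {0<..}) = {}"
      using cases(1) compare(1) by simp
  next
    fix lam assume "ls < lam"
    then show "\<exists>\<xi>0 \<xi>1. 0 < \<xi>0 \<and> \<xi>0 < \<xi>1 \<and>
        closure (Gamma1 lam \<sigma>) \<inter> ({0} \<times> {0<..}) = {(0, \<xi>0), (0, \<xi>1)}"
      using cases(3) compare[of lam] \<open>0 < ls\<close> by auto
  qed
qed

end
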